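(* Let $H$ be a strictly balanced graph, $c>0$, $h_0>0$, and let $p(m)$ satisfy $m\,p(m)^{k(H)}\to c$ as $m\to\infty$. Let $H_m=\mathcal{T}(H,G(m,p(m)))$, set $\mu=c^{v(H)}/|\mathrm{Aut}(H)|$ and assume $\mu\ge h_0$. Let $Z_\mu\sim\mathrm{Poisson}(\mu)$ and let $\lambda^{\circ}$ be the unique real root of $\lambda\mapsto\mathbb{E}[(Z_\mu-h_0)e^{-\lambda(Z_\mu-h_0)}]$ (namely $\lambda^{\circ}=\log(\mu/h_0)\ge 0$). Let $\lambda_m$ be the unique real root of $\lambda\mapsto\mathbb{E}[(H_m-h_0)e^{-\lambda(H_m-h_0)}]$. Then $|\lambda_m-\lambda^{\circ}|\to 0$ as $m\to\infty$.
   Context: $v(H),e(H)$ are the numbers of vertices and edges of $H$; $k(H)=\max\{e(F)/v(F): F\subseteq H,\ e(F)\ge1\}$; $H$ is strictly balanced if $e(H)/v(H)>e(F)/v(F)$ for every proper subgraph $F$ of $H$ with at least one edge. $\mathcal{T}(H,G)=\mathrm{inj}(H,G)/|\mathrm{Aut}(H)|$ is the number of unlabelled copies of $H$ in $G$, where $\mathrm{inj}(H,G)$ counts injective edge-preserving maps $V(H)\to V(G)$ and $\mathrm{Aut}(H)$ is the automorphism group. $G(m,p)$ is the Erdős–Rényi random graph on $m$ vertices with edge probability $p$. *)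

theory Defs
  imports "HOL-Analysis.Analysis" "HOL-Probability.Probability" "HOL-Library.FuncSet"
begin

definition simple_graph :: "'a set \<Rightarrow> 'a set set \<Rightarrow> bool" where
  "simple_graph V E \<longleftrightarrow> finite V \<and> (\<forall>e\<in>E. e \<subseteq> V \<and> card e = 2)"

definition subgraphs :: "'a set \<Rightarrow> 'a set set \<Rightarrow> ('a set \<times> 'a set set) set" where
  "subgraphs V E = {(W, D). W \<subseteq> V \<and> D \<subseteq> E \<and> (\<forall>e\<in>D. e \<subseteq> W)}"

definition max_density :: "'a set \<Rightarrow> 'a set set \<Rightarrow> real" where
  "max_density V E = Max {real (card D) / real (card W) | W D. (W, D) \<in> subgraphs V E \<and> D \<noteq> {}}"

definition strictly_balanced :: "'a set \<Rightarrow> 'a set set \<Rightarrow> bool" where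
  "strictly_balanced V E \<longleftrightarrow>
     (\<forall>W D. (W, D) \<in> subgraphs V E \<and> D \<noteq> {} \<and> (W, D) \<noteq> (V, E) \<longrightarrow>
        real (card D) / real (card W) < real (card E) / real (card V))"

definition automorphisms :: "'a set \<Rightarrow> 'a set set \<Rightarrow> ('a \<Rightarrow> 'a) set" where
  "automorphisms V E = {f \<in> V \<rightarrow>\<^sub>E V. bij_betw f V V \<and> (\<lambda>e. f ` e) ` E = E}"

definition inj_count :: "'a set \<Rightarrow> 'a set set \<Rightarrow> nat \<Rightarrow> nat set set \<Rightarrow> nat" where
  "inj_count V E m G = card {f \<in> V \<rightarrow>\<^sub>E {..<m}. inj_on f V \<and> (\<forall>e\<in>E. f ` e \<in> G)}"

definition copies :: "'a set \<Rightarrow> 'a set set \<Rightarrow> nat \<Rightarrow> nat set set \<Rightarrow> real" where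
  "copies V E m G = real (inj_count V E m G) / real (card (automorphisms V E))"

definition all_pairs :: "nat \<Rightarrow> nat set set" where
  "all_pairs m = {e. e \<subseteq> {..<m} \<and> card e = 2}"

definition gnp :: "nat \<Rightarrow> real \<Rightarrow> nat set set pmf" where
  "gnp m p = map_pmf (\<lambda>x. {e \<in> all_pairs m. x e})
                     (Pi_pmf (all_pairs m) False (\<lambda>_. bernoulli_pmf p))"

end

theory Submission
  imports Defs
begin

text \<open>Let \<open>X\<^sub>m\<close> be the number of copies of \<open>H\<close> in \<open>G(m, p(m))\<close>. Its \<open>r\<close>-th binomial
  moment \<open>E (X\<^sub>m choose r)\<close> is a sum over \<open>r\<close>-sets of copies of \<open>p\<close> to the number of edges of
  their union. Vertex-disjoint \<open>r\<close>-sets contribute \<open>mu ^ r / r!\<close> in the limit; if copies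
  overlap, strict balance gives the union at least \<open>k(H) (v + delta)\<close> edges on \<open>v\<close> vertices
  for a fixed \<open>delta > 0\<close>, and these sets are negligible. Truncating \<open>(1 + t) ^ n\<close> after \<open>R\<close>
  terms errs by at most one further term when \<open>-1 \<le> t \<le> 0\<close>, so the binomial moments
  determine the limits of \<open>E s ^ X\<^sub>m\<close> and \<open>E X\<^sub>m s ^ X\<^sub>m\<close> for \<open>0 \<le> s \<le> 1\<close>. Hence for
  \<open>lambda \<ge> 0\<close> the tilted mean \<open>E (X\<^sub>m - h0) exp (- lambda (X\<^sub>m - h0))\<close> tends to its
  Poisson counterpart, which is positive for \<open>lambda < log (mu / h0)\<close> and negative beyond;
  for \<open>lambda < 0\<close> positivity follows from \<open>y exp (e y) \<ge> y + e y\<^sup>2 / 2\<close> and the first two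
  moments. The tilted mean is decreasing in \<open>lambda\<close>, so its unique root is eventually
  trapped in every neighbourhood of \<open>log (mu / h0)\<close>.\<close>

section \<open>Exponential tilting and binomial moments\<close>

definition tilted :: "real \<Rightarrow> real \<Rightarrow> real \<Rightarrow> real" where
  "tilted h l y = (y - h) * exp (- l * (y - h))"

lemma tilted_antimono:
  assumes "l1 \<le> l2"
  shows "tilted h l2 y \<le> tilted h l1 y"
proof (cases "y - h \<ge> 0")
  case True
  then have "- l2 * (y - h) \<le> - l1 * (y - h)" using assms by (simp add: mult_right_mono)
  then show ?thesis using True unfolding tilted_def by (intro mult_left_mono) auto
next
  case False
  then have "- l1 * (y - h) \<le> - l2 * (y - h)" using assms by (simp add: mult_right_mono_neg)
  then show ?thesis using False unfolding tilted_def by (intro mult_left_mono_neg) auto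
qed

lemma tilted_strict_antimono:
  assumes "l1 < l2" "y \<noteq> h"
  shows "tilted h l2 y < tilted h l1 y"
proof (cases "y - h > 0")
  case True
  then have "- l2 * (y - h) < - l1 * (y - h)" using assms by (simp add: mult_strict_right_mono)
  then show ?thesis using True unfolding tilted_def by (intro mult_strict_left_mono) auto
next
  case False
  then have neg: "y - h < 0" using assms by simp
  then have "- l1 * (y - h) < - l2 * (y - h)" using assms by (simp add: mult_strict_right_mono_neg)
  then show ?thesis using neg unfolding tilted_def by (intro mult_strict_left_mono_neg) auto
qed

lemma tilted_of_nat:
  "tilted h l (real n) = exp (l * h) * (real n * exp (- l) ^ n - h * exp (- l) ^ n)"
proof -
  have "exp (- l * (real n - h)) = exp (l * h) * exp (- l) ^ n"
    by (simp add: exp_of_nat_mult[symmetric] algebra_simps flip: exp_add)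
  then show ?thesis by (simp add: tilted_def algebra_simps)
qed

lemma sums_power_div_fact:
  fixes x :: real
  shows "(\<lambda>n. x ^ n / fact n) sums exp x"
  using exp_converges[of x] by (simp add: divide_inverse mult.commute scaleR_conv_of_real)

lemma sums_of_nat_mult_power_div_fact:
  fixes x :: real
  shows "(\<lambda>n. real n * x ^ n / fact n) sums (x * exp x)"
proof -
  have "real (Suc n) * x ^ Suc n / fact (Suc n) = x * (x ^ n / fact n)" for n
    by (simp add: field_simps del: of_nat_Suc)
  then have "(\<lambda>n. real (Suc n) * x ^ Suc n / fact (Suc n)) sums (x * exp x)"
    using sums_mult[OF sums_power_div_fact, of x x] by simp
  then show ?thesis using sums_Suc_iff[of "\<lambda>n. real n * x ^ n / fact n"] by simp
qed

lemma expectation_poisson_tilted: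
  assumes mu: "mu > 0"
  shows "measure_pmf.expectation (poisson_pmf mu) (\<lambda>z. tilted h l (real z))
       = exp (l * h) * exp (- mu) * exp (mu * exp (- l)) * (mu * exp (- l) - h)"
proof -
  define s where "s = exp (- l)"
  define f where "f n = pmf (poisson_pmf mu) n * tilted h l (real n)" for n
  define g where "g n = (mu * s) ^ n / fact n" for n
  define C where "C = exp (l * h) * exp (- mu)"
  have f_eq: "f n = C * (real n * g n - h * g n)" for n
    using mu by (simp add: f_def g_def C_def tilted_of_nat s_def power_mult_distrib field_simps)
  have g_sums: "g sums exp (mu * s)"
    unfolding g_def by (rule sums_power_div_fact)
  have ng_sums: "(\<lambda>n. real n * g n) sums (mu * s * exp (mu * s))"
    unfolding g_def using sums_of_nat_mult_power_div_fact by simp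
  have f_sums: "f sums (C * (mu * s * exp (mu * s) - h * exp (mu * s)))"
    unfolding f_eq by (intro sums_mult sums_diff g_sums ng_sums)
  have S: "summable (\<lambda>n. C * (real n * g n + \<bar>h\<bar> * g n))"
    by (intro summable_mult summable_add sums_summable[OF ng_sums] sums_summable[OF g_sums])
  have B: "norm (f n) \<le> C * (real n * g n + \<bar>h\<bar> * g n)" for n
  proof -
    have "g n \<ge> 0" "C \<ge> 0" using mu by (simp_all add: g_def C_def s_def)
    then show ?thesis
      unfolding f_eq by (simp add: abs_mult mult_left_mono abs_triangle_ineq4[THEN order_trans])
  qed
  have "summable (\<lambda>n. norm (f n))"
    by (rule summable_comparison_test'[OF S, where N = 0]) (use B in auto)
  then have "integral\<^sup>L (count_space UNIV) f = (\<Sum>n. f n)"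
    by (intro integral_count_space_nat) (simp add: integrable_count_space_nat_iff)
  moreover have "measure_pmf.expectation (poisson_pmf mu) (\<lambda>z. tilted h l (real z))
      = integral\<^sup>L (count_space UNIV) f"
    unfolding measure_pmf_eq_density f_def by (subst integral_density) auto
  ultimately show ?thesis
    using sums_unique[OF f_sums] by (simp add: C_def s_def algebra_simps)
qed

lemma poisson_tilted_root:
  assumes mu: "mu > 0" and h: "h > 0"
  shows "(THE l. measure_pmf.expectation (poisson_pmf mu) (\<lambda>z. tilted h l (real z)) = 0)
         = ln (mu / h)"
proof -
  have "measure_pmf.expectation (poisson_pmf mu) (\<lambda>z. tilted h l (real z)) = 0
        \<longleftrightarrow> exp (- l) = h / mu" for l
    using mu by (simp add: expectation_poisson_tilted field_simps)
  also have "exp (- l) = h / mu \<longleftrightarrow> - l = ln (h / mu)" for l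
    using mu h by (metis exp_ln ln_exp divide_pos_pos)
  also have "- l = ln (h / mu) \<longleftrightarrow> l = ln (mu / h)" for l
    using mu h by (auto simp: ln_div)
  finally show ?thesis by simp
qed

lemma less_mult_exp_minus_iff:
  fixes mu h l :: real
  assumes "mu > 0" "h > 0"
  shows "h < mu * exp (- l) \<longleftrightarrow> l < ln (mu / h)"
proof -
  have "mu * exp (- l) * exp l = mu" by (simp add: mult.assoc flip: exp_add)
  then have "h < mu * exp (- l) \<longleftrightarrow> h * exp l < mu"
    by (metis exp_gt_zero mult_less_cancel_right_pos)
  also have "\<dots> \<longleftrightarrow> exp l < mu / h"
    using assms by (simp add: pos_less_divide_eq mult.commute)
  also have "\<dots> \<longleftrightarrow> l < ln (mu / h)"
    using assms by (metis divide_pos_pos exp_less_cancel_iff exp_ln)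
  finally show ?thesis .
qed

lemma mult_exp_minus_less_iff:
  fixes mu h l :: real
  assumes "mu > 0" "h > 0"
  shows "mu * exp (- l) < h \<longleftrightarrow> ln (mu / h) < l"
proof -
  have "mu * exp (- l) * exp l = mu" by (simp add: mult.assoc flip: exp_add)
  then have "mu * exp (- l) < h \<longleftrightarrow> mu < h * exp l"
    by (metis exp_gt_zero mult_less_cancel_right_pos)
  also have "\<dots> \<longleftrightarrow> mu / h < exp l"
    using assms by (simp add: pos_divide_less_eq mult.commute)
  also have "\<dots> \<longleftrightarrow> ln (mu / h) < l"
    using assms by (metis divide_pos_pos exp_less_cancel_iff exp_ln)
  finally show ?thesis .
qed

lemma expectation_poisson_tilted_pos:
  assumes "mu > 0" "h > 0" "l < ln (mu / h)"
  shows "measure_pmf.expectation (poisson_pmf mu) (\<lambda>z. tilted h l (real z)) > 0"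
  using assms less_mult_exp_minus_iff[OF assms(1,2)] by (simp add: expectation_poisson_tilted)

lemma expectation_poisson_tilted_neg:
  assumes "mu > 0" "h > 0" "ln (mu / h) < l"
  shows "measure_pmf.expectation (poisson_pmf mu) (\<lambda>z. tilted h l (real z)) < 0"
  using assms mult_exp_minus_less_iff[OF assms(1,2)]
  by (simp add: expectation_poisson_tilted mult_pos_neg)

lemma binomial_truncation_error:
  fixes t :: real
  assumes t: "-1 \<le> t" "t \<le> 0"
  shows "\<bar>(1 + t) ^ n - (\<Sum>j<R. real (n choose j) * t ^ j)\<bar> \<le> \<bar>t\<bar> ^ R * real (n choose R)"
proof (induction n arbitrary: R)
  case 0
  then show ?case by (cases R) (simp_all add: sum.lessThan_Suc_shift del: sum.lessThan_Suc)
next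
  case (Suc n)
  show ?case
  proof (cases R)
    case 0
    have "0 \<le> (1 + t) ^ Suc n" "(1 + t) ^ Suc n \<le> 1"
      using t power_le_one[of "1 + t" "Suc n"] by auto
    then show ?thesis using 0 by simp
  next
    case (Suc R')
    define A where "A = (\<Sum>j<Suc R'. real (n choose j) * t ^ j)"
    have pascal: "(\<Sum>j<Suc R'. real (Suc n choose j) * t ^ j)
        = A + t * (\<Sum>j<R'. real (n choose j) * t ^ j)"
      unfolding A_def by (induction R') (simp_all add: algebra_simps)
    have "(1 + t) ^ Suc n - (\<Sum>j<Suc R'. real (Suc n choose j) * t ^ j)
        = (1 + t) * ((1 + t) ^ n - A) + real (n choose R') * t ^ Suc R'"
      unfolding pascal by (simp add: A_def algebra_simps)
    also have "\<bar>\<dots>\<bar> \<le> (1 + t) * \<bar>(1 + t) ^ n - A\<bar> + real (n choose R') * \<bar>t\<bar> ^ Suc R'"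
      using t by (intro order.trans[OF abs_triangle_ineq]) (simp add: abs_mult power_abs)
    also have "(1 + t) * \<bar>(1 + t) ^ n - A\<bar> \<le> 1 * (\<bar>t\<bar> ^ Suc R' * real (n choose Suc R'))"
      using Suc.IH[of "Suc R'"] t unfolding A_def by (intro mult_mono) auto
    also have "1 * (\<bar>t\<bar> ^ Suc R' * real (n choose Suc R')) + real (n choose R') * \<bar>t\<bar> ^ Suc R'
        = \<bar>t\<bar> ^ Suc R' * real (Suc n choose Suc R')"
      by (simp add: algebra_simps)
    finally show ?thesis using Suc by simp
  qed
qed

lemma tendsto_from_truncation_bounds:
  fixes u :: "nat \<Rightarrow> real" and b :: "nat \<Rightarrow> nat \<Rightarrow> real" and \<beta> :: "nat \<Rightarrow> real"
  assumes lim: "\<And>j. (\<lambda>m. b m j) \<longlonglongrightarrow> \<beta> j"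
    and bound: "\<And>m R. \<bar>u m - (\<Sum>j<R. t ^ j * b m j)\<bar> \<le> \<bar>t\<bar> ^ R * b m R"
    and series: "(\<lambda>R. \<Sum>j<R. t ^ j * \<beta> j) \<longlonglongrightarrow> L"
    and tail: "(\<lambda>R. \<bar>t\<bar> ^ R * \<beta> R) \<longlonglongrightarrow> 0"
  shows "u \<longlonglongrightarrow> L"
proof (rule tendstoI)
  fix \<epsilon> :: real
  assume "\<epsilon> > 0"
  then have "\<epsilon> / 4 > 0" by simp
  then have "eventually (\<lambda>R. dist (\<Sum>j<R. t ^ j * \<beta> j) L < \<epsilon> / 4) sequentially"
      and "eventually (\<lambda>R. dist (\<bar>t\<bar> ^ R * \<beta> R) 0 < \<epsilon> / 4) sequentially"
    by (fact tendstoD[OF series] tendstoD[OF tail])+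
  then obtain R where R1: "dist (\<Sum>j<R. t ^ j * \<beta> j) L < \<epsilon> / 4"
      and R2: "dist (\<bar>t\<bar> ^ R * \<beta> R) 0 < \<epsilon> / 4"
    using eventually_happens'[OF sequentially_bot] eventually_conj by blast
  have l1: "(\<lambda>m. \<Sum>j<R. t ^ j * b m j) \<longlonglongrightarrow> (\<Sum>j<R. t ^ j * \<beta> j)"
    and l2: "(\<lambda>m. \<bar>t\<bar> ^ R * b m R) \<longlonglongrightarrow> \<bar>t\<bar> ^ R * \<beta> R"
    by (intro tendsto_intros lim)+
  have "eventually (\<lambda>m. dist (\<Sum>j<R. t ^ j * b m j) (\<Sum>j<R. t ^ j * \<beta> j) < \<epsilon> / 4) sequentially"
    and "eventually (\<lambda>m. dist (\<bar>t\<bar> ^ R * b m R) (\<bar>t\<bar> ^ R * \<beta> R) < \<epsilon> / 4) sequentially"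
    by (fact tendstoD[OF l1 \<open>\<epsilon> / 4 > 0\<close>] tendstoD[OF l2 \<open>\<epsilon> / 4 > 0\<close>])+
  then show "eventually (\<lambda>m. dist (u m) L < \<epsilon>) sequentially"
  proof eventually_elim
    case (elim m)
    then show ?case using bound[of m R] R1 R2 unfolding dist_real_def by linarith
  qed
qed

lemma binomial_moments_imp_pgf_tendsto:
  fixes A :: "nat \<Rightarrow> 'b set" and w :: "nat \<Rightarrow> 'b \<Rightarrow> real" and Y :: "nat \<Rightarrow> 'b \<Rightarrow> nat"
  assumes fin: "\<And>m. finite (A m)" and w: "\<And>m x. x \<in> A m \<Longrightarrow> 0 \<le> w m x"
    and moments: "\<And>r. (\<lambda>m. \<Sum>x\<in>A m. w m x * real (Y m x choose r)) \<longlonglongrightarrow> C * (mu ^ r / fact r)"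
    and s: "0 \<le> s" "s \<le> 1"
  shows "(\<lambda>m. \<Sum>x\<in>A m. w m x * s ^ Y m x) \<longlonglongrightarrow> C * exp (mu * (s - 1))"
proof (rule tendsto_from_truncation_bounds[OF moments])
  define t where "t = s - 1"
  have t: "-1 \<le> t" "t \<le> 0" using s by (auto simp: t_def)
  have "(\<lambda>j. t ^ j * (C * (mu ^ j / fact j))) = (\<lambda>j. C * ((mu * t) ^ j / fact j))"
    by (rule ext) (simp add: power_mult_distrib field_simps)
  then have "(\<lambda>j. t ^ j * (C * (mu ^ j / fact j))) sums (C * exp (mu * t))"
    by (simp only:) (intro sums_mult sums_power_div_fact)
  then show "(\<lambda>R. \<Sum>j<R. (s - 1) ^ j * (C * (mu ^ j / fact j))) \<longlonglongrightarrow> C * exp (mu * (s - 1))"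
    by (simp add: sums_def t_def)
  have "(\<lambda>R. C * ((mu * \<bar>t\<bar>) ^ R / fact R)) \<longlonglongrightarrow> C * 0"
    by (intro tendsto_mult tendsto_const summable_LIMSEQ_zero sums_summable[OF sums_power_div_fact])
  then show "(\<lambda>R. \<bar>s - 1\<bar> ^ R * (C * (mu ^ R / fact R))) \<longlonglongrightarrow> 0"
    by (simp add: t_def power_mult_distrib mult_ac)
  fix m R
  have "\<bar>(\<Sum>x\<in>A m. w m x * s ^ Y m x) - (\<Sum>j<R. t ^ j * (\<Sum>x\<in>A m. w m x * real (Y m x choose j)))\<bar>
      = \<bar>\<Sum>x\<in>A m. w m x * ((1 + t) ^ Y m x - (\<Sum>j<R. real (Y m x choose j) * t ^ j))\<bar>"
    by (simp add: t_def sum_distrib_left sum_subtractf right_diff_distrib sum.swap[of _ "{..<R}"] mult_ac)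
  also have "\<dots> \<le> (\<Sum>x\<in>A m. w m x * (\<bar>t\<bar> ^ R * real (Y m x choose R)))"
    using w binomial_truncation_error[OF t]
    by (intro order.trans[OF sum_abs] sum_mono) (simp add: abs_mult mult_left_mono)
  finally show "\<bar>(\<Sum>x\<in>A m. w m x * s ^ Y m x) - (\<Sum>j<R. (s - 1) ^ j * (\<Sum>x\<in>A m. w m x * real (Y m x choose j)))\<bar>
      \<le> \<bar>s - 1\<bar> ^ R * (\<Sum>x\<in>A m. w m x * real (Y m x choose R))"
    by (simp add: t_def sum_distrib_left mult_ac)
qed

lemma binomial_moments_imp_pgf_deriv_tendsto:
  fixes A :: "nat \<Rightarrow> 'b set" and w :: "nat \<Rightarrow> 'b \<Rightarrow> real" and Y :: "nat \<Rightarrow> 'b \<Rightarrow> nat"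
  assumes fin: "\<And>m. finite (A m)" and w: "\<And>m x. x \<in> A m \<Longrightarrow> 0 \<le> w m x"
    and moments: "\<And>r. (\<lambda>m. \<Sum>x\<in>A m. w m x * real (Y m x choose r)) \<longlonglongrightarrow> mu ^ r / fact r"
    and s: "0 \<le> s" "s \<le> 1"
  shows "(\<lambda>m. \<Sum>x\<in>A m. w m x * (real (Y m x) * s ^ Y m x)) \<longlonglongrightarrow> mu * s * exp (mu * (s - 1))"
proof -
  \<comment> \<open>Size-biasing: the weights \<open>w * Y\<close> with counts \<open>Y - 1\<close> have binomial moments \<open>mu * mu ^ r / r!\<close>.\<close>
  have size_bias: "v * real (Y m x) * real ((Y m x - 1) choose r)
      = real (Suc r) * (v * real (Y m x choose Suc r))" for v m x r
  proof (cases "Y m x")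
    case (Suc n)
    then show ?thesis
      using Suc_times_binomial_eq[of n r] by (metis diff_Suc_1 of_nat_mult mult.commute mult.left_commute)
  qed simp
  have "(\<lambda>m. \<Sum>x\<in>A m. (w m x * real (Y m x)) * real ((Y m x - 1) choose r)) \<longlonglongrightarrow> mu * (mu ^ r / fact r)" for r
  proof -
    have "(\<lambda>m. real (Suc r) * (\<Sum>x\<in>A m. w m x * real (Y m x choose Suc r)))
        \<longlonglongrightarrow> real (Suc r) * (mu ^ Suc r / fact (Suc r))"
      by (intro tendsto_intros moments)
    moreover have "real (Suc r) * (mu ^ Suc r / fact (Suc r)) = mu * (mu ^ r / fact r)"
      by (simp add: field_simps del: of_nat_Suc)
    ultimately show ?thesis
      by (simp only: size_bias sum_distrib_left[symmetric])
  qed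
  then have "(\<lambda>m. \<Sum>x\<in>A m. (w m x * real (Y m x)) * s ^ (Y m x - 1)) \<longlonglongrightarrow> mu * exp (mu * (s - 1))"
    using fin w s by (intro binomial_moments_imp_pgf_tendsto) auto
  then have "(\<lambda>m. s * (\<Sum>x\<in>A m. (w m x * real (Y m x)) * s ^ (Y m x - 1))) \<longlonglongrightarrow> s * (mu * exp (mu * (s - 1)))"
    by (intro tendsto_mult tendsto_const)
  moreover have "s * (v * real n * s ^ (n - 1)) = v * (real n * s ^ n)" for v n
    by (cases n) auto
  ultimately show ?thesis
    by (simp only: sum_distrib_left mult.assoc mult.left_commute[of s mu])
qed

lemma the_root_of_tilted_sum:
  fixes A :: "'b set" and w y :: "'b \<Rightarrow> real" and h a b :: real
  defines "F \<equiv> \<lambda>l. \<Sum>x\<in>A. w x * tilted h l (y x)"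
  assumes fin: "finite A" and w: "\<And>x. x \<in> A \<Longrightarrow> 0 \<le> w x" and ab: "a < b"
    and Fa: "F a > 0" and Fb: "F b < 0"
  shows "(THE l. F l = 0) \<in> {a<..<b}"
proof -
  have "\<exists>x\<in>A. w x * tilted h b (y x) \<noteq> 0"
  proof (rule ccontr)
    assume "\<not> ?thesis"
    then have "F b = 0" unfolding F_def by (auto intro!: sum.neutral)
    then show False using Fb by simp
  qed
  then obtain x0 where x0: "x0 \<in> A" "w x0 * tilted h b (y x0) \<noteq> 0" by blast
  have strict: "F l2 < F l1" if "l1 < l2" for l1 l2
    unfolding F_def
  proof (rule sum_strict_mono_ex1[OF fin])
    show "\<forall>x\<in>A. w x * tilted h l2 (y x) \<le> w x * tilted h l1 (y x)"
      using w tilted_antimono[of l1 l2] that by (simp add: mult_left_mono)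
    have "w x0 > 0" "y x0 \<noteq> h"
      using x0 w[of x0] by (auto simp: tilted_def)
    then show "\<exists>x\<in>A. w x * tilted h l2 (y x) < w x * tilted h l1 (y x)"
      using x0(1) that by (intro bexI[of _ x0] mult_strict_left_mono tilted_strict_antimono)
  qed
  have "isCont F x" for x unfolding F_def tilted_def by (intro continuous_intros)
  then obtain r where r: "a \<le> r" "r \<le> b" "F r = 0"
    using IVT2[of F b 0 a] Fa Fb ab by auto
  moreover have "r \<noteq> a" "r \<noteq> b" using r(3) Fa Fb by auto
  ultimately have "r \<in> {a<..<b}" by auto
  moreover have "(THE l. F l = 0) = r"
  proof (rule the_equality)
    fix l
    assume "F l = 0"
    then show "l = r"
      using strict[of l r] strict[of r l] r(3) by (cases l r rule: linorder_cases) auto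
  qed (rule r(3))
  ultimately show ?thesis by simp
qed

lemma mult_exp_ge_quadratic:
  fixes y e :: real
  assumes e: "0 \<le> e" "- 1 \<le> e * y"
  shows "y + e / 2 * y ^ 2 \<le> y * exp (e * y)"
proof (cases "y \<ge> 0")
  case True
  have "y + e / 2 * y ^ 2 \<le> y * (1 + e * y)"
    using True e by (simp add: power2_eq_square algebra_simps)
  also have "\<dots> \<le> y * exp (e * y)"
    using True by (intro mult_left_mono) auto
  finally show ?thesis .
next
  case False
  define z where "z = - e * y"
  have z: "0 \<le> z" "z \<le> 1" using False e by (auto simp: z_def mult_nonneg_nonpos)
  \<comment> \<open>\<open>exp (e * y) = 1 / exp z \<le> 1 / (1 + z)\<close>, and \<open>y + e / 2 * y ^ 2 = y (1 - z / 2) \<le> y / (1 + z)\<close>.\<close>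
  have "exp (e * y) * (1 + z) \<le> exp (e * y) * exp z"
    by (intro mult_left_mono) auto
  also have "\<dots> = 1" by (simp add: z_def flip: exp_add)
  finally have "y * 1 \<le> y * (exp (e * y) * (1 + z))"
    using False by (intro mult_left_mono_neg) auto
  moreover have "(y + e / 2 * y ^ 2) * (1 + z) \<le> y"
  proof -
    have "(y + e / 2 * y ^ 2) * (1 + z) = y - (e / 2 * y ^ 2) * (1 - z)"
      by (simp add: z_def power2_eq_square field_simps)
    moreover have "0 \<le> (e / 2 * y ^ 2) * (1 - z)" using z e by simp
    ultimately show ?thesis by linarith
  qed
  ultimately have "(y + e / 2 * y ^ 2) * (1 + z) \<le> (y * exp (e * y)) * (1 + z)"
    by (simp add: mult.assoc)
  then show ?thesis using z by simp
qed

lemma of_nat_power2_eq_choose_two: "real n ^ 2 = 2 * real (n choose 2) + real n"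
proof (induction n)
  case (Suc n)
  have "Suc n choose 2 = n + (n choose 2)" by (simp add: numeral_2_eq_2)
  then show ?case using Suc by (simp add: power2_eq_square algebra_simps)
qed simp

section \<open>Strictly balanced graphs\<close>

locale strictly_balanced_graph =
  fixes V :: "'a set" and E :: "'a set set"
  assumes simple: "simple_graph V E" and edges_nonempty: "E \<noteq> {}"
    and balanced: "strictly_balanced V E"
begin

definition kH :: real where "kH = real (card E) / real (card V)"

lemma finite_V: "finite V"
  using simple by (simp add: simple_graph_def)

lemma edge_subset: "e \<in> E \<Longrightarrow> e \<subseteq> V"
  using simple by (simp add: simple_graph_def)

lemma card_edge: "e \<in> E \<Longrightarrow> card e = 2"
  using simple by (simp add: simple_graph_def)

lemma edge_nonempty: "e \<in> E \<Longrightarrow> e \<noteq> {}"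
  using card_edge by fastforce

lemma finite_E: "finite E"
  using finite_V edge_subset by (meson Pow_iff finite_Pow_iff finite_subset subsetI)

lemma finite_subgraphs: "finite (subgraphs V E)"
proof (rule finite_subset)
  show "subgraphs V E \<subseteq> Pow V \<times> Pow E" by (auto simp: subgraphs_def)
qed (simp add: finite_V finite_E)

lemma subgraph_finite:
  assumes "(W, D) \<in> subgraphs V E"
  shows "finite W" "finite D"
  using assms finite_V finite_E finite_subset by (auto simp: subgraphs_def)

lemma subgraph_card_vertices_pos:
  assumes sub: "(W, D) \<in> subgraphs V E" and "D \<noteq> {}"
  shows "card W > 0"
proof -
  obtain d where "d \<in> D" using \<open>D \<noteq> {}\<close> by auto
  with sub have "d \<subseteq> W" "d \<noteq> {}" by (auto simp: subgraphs_def dest: edge_nonempty)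
  then show ?thesis using subgraph_finite(1)[OF sub] by (auto simp: card_gt_0_iff)
qed

lemma VE_subgraph: "(V, E) \<in> subgraphs V E"
  using edge_subset by (auto simp: subgraphs_def)

lemma card_V_pos: "card V > 0"
  using subgraph_card_vertices_pos[OF VE_subgraph edges_nonempty] .

lemma kH_pos: "kH > 0"
  using card_V_pos edges_nonempty finite_E by (simp add: kH_def card_gt_0_iff)

lemma card_E_eq: "real (card E) = kH * real (card V)"
  using card_V_pos by (simp add: kH_def)

lemma subgraph_density_less:
  assumes "(W, D) \<in> subgraphs V E" "D \<noteq> {}" "(W, D) \<noteq> (V, E)"
  shows "real (card D) < kH * real (card W)"
proof -
  have "real (card D) / real (card W) < kH"
    using balanced assms unfolding strictly_balanced_def kH_def by blast
  then show ?thesis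
    using subgraph_card_vertices_pos[OF assms(1,2)] by (simp add: field_simps)
qed

lemma subgraph_density_le:
  assumes "(W, D) \<in> subgraphs V E"
  shows "real (card D) \<le> kH * real (card W)"
proof (cases "D = {} \<or> (W, D) = (V, E)")
  case True
  then show ?thesis using card_E_eq kH_pos by auto
next
  case False
  then show ?thesis using subgraph_density_less[OF assms] by fastforce
qed

lemma max_density_eq: "max_density V E = kH"
  unfolding max_density_def
proof (rule Max_eqI)
  have "{real (card D) / real (card W) |W D. (W, D) \<in> subgraphs V E \<and> D \<noteq> {}}
      \<subseteq> (\<lambda>(W, D). real (card D) / real (card W)) ` subgraphs V E"
    by auto
  then show "finite {real (card D) / real (card W) |W D. (W, D) \<in> subgraphs V E \<and> D \<noteq> {}}"
    by (rule finite_subset) (intro finite_imageI finite_subgraphs)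
  show "kH \<in> {real (card D) / real (card W) |W D. (W, D) \<in> subgraphs V E \<and> D \<noteq> {}}"
    using VE_subgraph edges_nonempty unfolding kH_def by blast
  fix x
  assume "x \<in> {real (card D) / real (card W) |W D. (W, D) \<in> subgraphs V E \<and> D \<noteq> {}}"
  then obtain W D where x: "x = real (card D) / real (card W)"
    and sub: "(W, D) \<in> subgraphs V E" "D \<noteq> {}" by blast
  then show "x \<le> kH"
    using subgraph_density_le[OF sub(1)] subgraph_card_vertices_pos[OF sub]
    by (simp add: divide_le_eq mult.commute)
qed

lemma Union_edges: "\<Union>E = V"
proof (rule ccontr)
  assume "\<Union>E \<noteq> V"
  then obtain w where w: "w \<in> V" "w \<notin> \<Union>E" using edge_subset by blast
  then have "(V - {w}, E) \<in> subgraphs V E" "(V - {w}, E) \<noteq> (V, E)"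
    using edge_subset by (auto simp: subgraphs_def)
  then have "real (card E) < kH * real (card (V - {w}))"
    using subgraph_density_less edges_nonempty by blast
  also have "\<dots> \<le> kH * real (card V)"
    using kH_pos finite_V by (intro mult_left_mono) (auto intro: card_mono)
  finally show False using card_E_eq by simp
qed

lemma edge_partition_shares_vertex:
  assumes "E1 \<union> E2 = E" "E1 \<inter> E2 = {}" "E1 \<noteq> {}" "E2 \<noteq> {}"
  shows "\<Union>E1 \<inter> \<Union>E2 \<noteq> {}"
proof
  assume disj: "\<Union>E1 \<inter> \<Union>E2 = {}"
  have sub: "(\<Union>E1, E1) \<in> subgraphs V E" "(\<Union>E2, E2) \<in> subgraphs V E"
    using assms(1) edge_subset by (auto simp: subgraphs_def)
  have "(\<Union>E1, E1) \<noteq> (V, E)" "(\<Union>E2, E2) \<noteq> (V, E)"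
    using assms by auto
  then have "real (card E1) + real (card E2) < kH * real (card (\<Union>E1)) + kH * real (card (\<Union>E2))"
    using subgraph_density_less[OF sub(1) assms(3)] subgraph_density_less[OF sub(2) assms(4)]
    by linarith
  moreover have "card E = card E1 + card E2"
    using assms finite_E by (metis card_Un_disjoint finite_Un)
  moreover have "card V = card (\<Union>E1) + card (\<Union>E2)"
    using Union_edges assms(1) disj subgraph_finite(1)[OF sub(1)] subgraph_finite(1)[OF sub(2)]
    by (metis Union_Un_distrib card_Un_disjoint)
  ultimately show False using card_E_eq by (simp add: distrib_left)
qed

definition deficit :: "'b set \<Rightarrow> 'b set set \<Rightarrow> real" where
  "deficit W D = real (card W) - real (card D) / kH"

lemma deficit_nonneg: "(W, D) \<in> subgraphs V E \<Longrightarrow> 0 \<le> deficit W D"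
  using subgraph_density_le[of W D] kH_pos by (simp add: deficit_def field_simps)

definition min_deficit :: real where
  "min_deficit = Min {deficit W D |W D. (W, D) \<in> subgraphs V E \<and> W \<noteq> {} \<and> (W, D) \<noteq> (V, E)}"

lemma finite_proper_deficits:
  "finite {deficit W D |W D. (W, D) \<in> subgraphs V E \<and> W \<noteq> {} \<and> (W, D) \<noteq> (V, E)}"
proof -
  have "{deficit W D |W D. (W, D) \<in> subgraphs V E \<and> W \<noteq> {} \<and> (W, D) \<noteq> (V, E)}
      \<subseteq> (\<lambda>(W, D). deficit W D) ` subgraphs V E"
    by auto
  then show ?thesis by (rule finite_subset) (intro finite_imageI finite_subgraphs)
qed

lemma min_deficit_le:
  "(W, D) \<in> subgraphs V E \<Longrightarrow> W \<noteq> {} \<Longrightarrow> (W, D) \<noteq> (V, E) \<Longrightarrow> min_deficit \<le> deficit W D"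
  unfolding min_deficit_def using finite_proper_deficits by (intro Min_le) auto

lemma min_deficit_pos: "min_deficit > 0"
proof -
  have "(V, {}) \<in> subgraphs V E" "V \<noteq> {}" "(V, {}) \<noteq> (V, E)"
    using card_V_pos edges_nonempty by (auto simp: subgraphs_def)
  moreover have "deficit W D > 0"
    if "(W, D) \<in> subgraphs V E" "W \<noteq> {}" "(W, D) \<noteq> (V, E)" for W D
  proof (cases "D = {}")
    case True
    then show ?thesis using that subgraph_finite[OF that(1)] by (simp add: deficit_def card_gt_0_iff)
  next
    case False
    then show ?thesis
      using subgraph_density_less[OF that(1) False that(3)] kH_pos by (simp add: deficit_def field_simps)
  qed
  ultimately show ?thesis
    unfolding min_deficit_def using finite_proper_deficits by (subst Min_gr_iff) auto
qed

end

section \<open>Copies of \<open>H\<close> in the complete graph\<close>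

context strictly_balanced_graph
begin

definition embeddings :: "nat \<Rightarrow> ('a \<Rightarrow> nat) set" where
  "embeddings m = {f \<in> V \<rightarrow>\<^sub>E {..<m}. inj_on f V}"

definition copy_of :: "('a \<Rightarrow> nat) \<Rightarrow> nat set set" where
  "copy_of f = (`) f ` E"

definition copies_in :: "nat \<Rightarrow> nat set set set" where
  "copies_in m = copy_of ` embeddings m"

definition n_copies :: "nat \<Rightarrow> nat set set \<Rightarrow> nat" where
  "n_copies m G = card {S \<in> copies_in m. S \<subseteq> G}"

lemma embeddingsD:
  assumes "f \<in> embeddings m"
  shows "inj_on f V" "f ` V \<subseteq> {..<m}" "f \<in> extensional V"
  using assms by (auto simp: embeddings_def PiE_def)

lemma finite_embeddings: "finite (embeddings m)"
  unfolding embeddings_def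
  by (rule finite_subset[of _ "V \<rightarrow>\<^sub>E {..<m}"]) (auto intro: finite_PiE finite_V)

lemma finite_copies_in: "finite (copies_in m)"
  unfolding copies_in_def by (intro finite_imageI finite_embeddings)

lemma card_embeddings: "card (embeddings m) = (\<Prod>i<card V. m - i)"
  using card_inj_on_subset_funcset[OF finite_V finite_lessThan subset_refl, of m]
  by (simp add: embeddings_def atLeast0LessThan)

lemma inj_on_image_edges: "inj_on f V \<Longrightarrow> inj_on ((`) f) E"
  by (rule inj_on_image) (simp add: Union_edges)

lemma Union_copy_of: "\<Union>(copy_of f) = f ` V"
  unfolding copy_of_def using Union_edges by auto

lemma copy_of_edge_nonempty: "d \<in> copy_of f \<Longrightarrow> d \<noteq> {}"
  using edge_nonempty by (auto simp: copy_of_def)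

lemma copies_inD:
  assumes "S \<in> copies_in m"
  shows "finite S" "card S = card E" "\<Union>S \<subseteq> {..<m}" "S \<subseteq> all_pairs m"
proof -
  obtain f where f: "f \<in> embeddings m" "S = copy_of f"
    using assms by (auto simp: copies_in_def)
  show "finite S" using f finite_E by (simp add: copy_of_def)
  show "card S = card E"
    using f inj_on_image_edges[OF embeddingsD(1)] by (simp add: copy_of_def card_image)
  show "\<Union>S \<subseteq> {..<m}" using f embeddingsD(2) Union_copy_of by metis
  show "S \<subseteq> all_pairs m"
  proof
    fix d
    assume "d \<in> S"
    then obtain e where e: "e \<in> E" "d = f ` e" using f by (auto simp: copy_of_def)
    then have "card d = 2"
      using card_edge edge_subset inj_on_subset[OF embeddingsD(1)[OF f(1)]] by (simp add: card_image)
    moreover have "d \<subseteq> {..<m}" using e edge_subset embeddingsD(2)[OF f(1)] by blast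
    ultimately show "d \<in> all_pairs m" by (simp add: all_pairs_def)
  qed
qed

lemma automorphism_embedding_same_copy:
  assumes "\<sigma> \<in> automorphisms V E" "f0 \<in> embeddings m"
  shows "restrict (f0 \<circ> \<sigma>) V \<in> embeddings m" "copy_of (restrict (f0 \<circ> \<sigma>) V) = copy_of f0"
proof -
  have \<sigma>: "\<sigma> ` V = V" "inj_on \<sigma> V" "(`) \<sigma> ` E = E"
    using assms(1) by (auto simp: automorphisms_def bij_betw_def)
  have "inj_on (f0 \<circ> \<sigma>) V"
    using \<sigma> embeddingsD(1)[OF assms(2)] by (simp add: comp_inj_on)
  moreover have "f0 (\<sigma> x) < m" if "x \<in> V" for x
    using that \<sigma>(1) embeddingsD(2)[OF assms(2)] by blast
  ultimately show "restrict (f0 \<circ> \<sigma>) V \<in> embeddings m"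
    by (auto simp: embeddings_def)
  have "restrict (f0 \<circ> \<sigma>) V ` e = f0 ` (\<sigma> ` e)" if "e \<in> E" for e
    using edge_subset[OF that] by auto
  then have "copy_of (restrict (f0 \<circ> \<sigma>) V) = (`) f0 ` ((`) \<sigma> ` E)"
    unfolding copy_of_def image_image by (rule image_cong[OF refl])
  then show "copy_of (restrict (f0 \<circ> \<sigma>) V) = copy_of f0"
    by (simp add: \<sigma>(3) copy_of_def)
qed

lemma automorphism_of_same_copy:
  assumes f0: "f0 \<in> embeddings m" and f: "f \<in> embeddings m" and same: "copy_of f = copy_of f0"
  defines "\<sigma> \<equiv> restrict (\<lambda>x. inv_into V f0 (f x)) V"
  shows "\<sigma> \<in> automorphisms V E" "f = restrict (f0 \<circ> \<sigma>) V"
proof -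
  have inj0: "inj_on f0 V" and inj: "inj_on f V" using f0 f by (auto dest: embeddingsD)
  have img: "f ` V = f0 ` V" using same Union_copy_of by metis
  have \<sigma>_in: "\<sigma> x \<in> V" and f0_\<sigma>: "f0 (\<sigma> x) = f x" if "x \<in> V" for x
  proof -
    have "f x \<in> f0 ` V" using that img by blast
    then show "\<sigma> x \<in> V" "f0 (\<sigma> x) = f x"
      using that by (simp_all add: \<sigma>_def inv_into_into f_inv_into_f)
  qed
  show "f = restrict (f0 \<circ> \<sigma>) V"
    using f0_\<sigma> embeddingsD(3)[OF f] by (auto simp: extensional_def)
  have inj_\<sigma>: "inj_on \<sigma> V"
    using inj f0_\<sigma> by (metis inj_on_def)
  have "\<sigma> ` V = V"
    using inj_\<sigma> \<sigma>_in finite_V by (intro card_subset_eq) (auto simp: card_image)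
  then have bij: "bij_betw \<sigma> V V"
    using inj_\<sigma> by (simp add: bij_betw_def)
  have "(`) \<sigma> ` E \<subseteq> E"
  proof
    fix d
    assume "d \<in> (`) \<sigma> ` E"
    then obtain e where e: "e \<in> E" "d = \<sigma> ` e" by auto
    have "f0 ` d = f ` e" using e edge_subset f0_\<sigma> by (auto simp: image_image intro!: image_cong)
    moreover have "f ` e \<in> copy_of f" using e(1) by (simp add: copy_of_def)
    ultimately have "f0 ` d \<in> copy_of f0" using same by simp
    then obtain e' where e': "e' \<in> E" "f0 ` d = f0 ` e'" by (auto simp: copy_of_def)
    have "d \<subseteq> V" using e edge_subset \<sigma>_in by auto
    then have "d = e'" using e' edge_subset inj0 by (simp add: inj_on_image_eq_iff)
    then show "d \<in> E" using e' by simp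
  qed
  moreover have "card ((`) \<sigma> ` E) = card E"
    using inj_on_image_edges[OF inj_\<sigma>] by (simp add: card_image)
  ultimately have "(`) \<sigma> ` E = E" using finite_E by (intro card_subset_eq)
  moreover have "\<sigma> \<in> V \<rightarrow>\<^sub>E V" using \<sigma>_in by (auto simp: \<sigma>_def)
  ultimately show "\<sigma> \<in> automorphisms V E" using bij by (simp add: automorphisms_def)
qed

lemma card_embeddings_with_copy:
  assumes f0: "f0 \<in> embeddings m"
  shows "card {f \<in> embeddings m. copy_of f = copy_of f0} = card (automorphisms V E)"
proof -
  have "{f \<in> embeddings m. copy_of f = copy_of f0} = (\<lambda>\<sigma>. restrict (f0 \<circ> \<sigma>) V) ` automorphisms V E"
    using automorphism_embedding_same_copy[OF _ f0] automorphism_of_same_copy[OF f0] by blast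
  moreover have "inj_on (\<lambda>\<sigma>. restrict (f0 \<circ> \<sigma>) V) (automorphisms V E)"
  proof (rule inj_onI)
    fix \<sigma> \<tau>
    assume "\<sigma> \<in> automorphisms V E" "\<tau> \<in> automorphisms V E"
      and eq: "restrict (f0 \<circ> \<sigma>) V = restrict (f0 \<circ> \<tau>) V"
    then have \<sigma>\<tau>: "\<sigma> \<in> V \<rightarrow>\<^sub>E V" "\<tau> \<in> V \<rightarrow>\<^sub>E V" by (auto simp: automorphisms_def)
    show "\<sigma> = \<tau>"
    proof (rule PiE_ext[OF \<sigma>\<tau>])
      fix x
      assume "x \<in> V"
      then have "f0 (\<sigma> x) = f0 (\<tau> x)" "\<sigma> x \<in> V" "\<tau> x \<in> V"
        using fun_cong[OF eq, of x] \<sigma>\<tau> by auto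
      then show "\<sigma> x = \<tau> x" using embeddingsD(1)[OF f0] by (auto dest: inj_onD)
    qed
  qed
  ultimately show ?thesis by (simp add: card_image)
qed

lemma card_embeddings_copy_in:
  assumes "X \<subseteq> copies_in m"
  shows "card {f \<in> embeddings m. copy_of f \<in> X} = card (automorphisms V E) * card X"
proof -
  have "{f \<in> embeddings m. copy_of f \<in> X} = (\<Union>S\<in>X. {f \<in> embeddings m. copy_of f = S})" by auto
  also have "card \<dots> = (\<Sum>S\<in>X. card {f \<in> embeddings m. copy_of f = S})"
    using assms finite_subset[OF assms finite_copies_in] finite_embeddings
    by (intro card_UN_disjoint) auto
  also have "\<dots> = (\<Sum>S\<in>X. card (automorphisms V E))"
    using assms card_embeddings_with_copy by (intro sum.cong) (auto simp: copies_in_def)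
  finally show ?thesis by simp
qed

lemma finite_automorphisms: "finite (automorphisms V E)"
  by (rule finite_subset[OF _ finite_PiE[OF finite_V finite_V]]) (auto simp: automorphisms_def)

lemma restrict_id_automorphism: "restrict id V \<in> automorphisms V E"
proof -
  have id_on: "restrict id V ` e = e" if "e \<subseteq> V" for e
    using that by auto
  then have "(`) (restrict id V) ` E = (\<lambda>e. e) ` E"
    using edge_subset by (intro image_cong) auto
  moreover have "bij_betw (restrict id V) V V"
    using id_on[of V] by (simp add: bij_betw_def inj_on_def)
  ultimately show ?thesis by (simp add: automorphisms_def)
qed

lemma card_automorphisms_pos: "card (automorphisms V E) > 0"
  using finite_automorphisms restrict_id_automorphism by (auto simp: card_gt_0_iff)

lemma card_copies_in: "card (automorphisms V E) * card (copies_in m) = card (embeddings m)"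
proof -
  have "{f \<in> embeddings m. copy_of f \<in> copies_in m} = embeddings m"
    by (auto simp: copies_in_def)
  then show ?thesis
    using card_embeddings_copy_in[OF subset_refl, of m] by (simp only:)
qed

lemma copies_eq_n_copies: "copies V E m G = real (n_copies m G)"
proof -
  have "{f \<in> V \<rightarrow>\<^sub>E {..<m}. inj_on f V \<and> (\<forall>e\<in>E. f ` e \<in> G)}
      = {f \<in> embeddings m. copy_of f \<in> {S \<in> copies_in m. S \<subseteq> G}}"
    by (auto simp: embeddings_def copies_in_def copy_of_def)
  then have "inj_count V E m G = card {f \<in> embeddings m. copy_of f \<in> {S \<in> copies_in m. S \<subseteq> G}}"
    unfolding inj_count_def by (simp only:)
  also have "\<dots> = card (automorphisms V E) * n_copies m G"
    unfolding n_copies_def by (rule card_embeddings_copy_in) auto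
  finally have "inj_count V E m G = card (automorphisms V E) * n_copies m G" .
  then show ?thesis
    using card_automorphisms_pos by (simp add: copies_def)
qed

end

section \<open>Families of copies\<close>

context strictly_balanced_graph
begin

definition vertex_disjoint :: "nat set set set \<Rightarrow> bool" where
  "vertex_disjoint R \<longleftrightarrow> (\<forall>S\<in>R. \<forall>T\<in>R. S \<noteq> T \<longrightarrow> \<Union>S \<inter> \<Union>T = {})"

lemma finite_family_of_copies:
  assumes "R \<subseteq> copies_in m"
  shows "finite R" "finite (\<Union>R)" "finite (\<Union>(\<Union>R))"
proof -
  show "finite R" using assms finite_copies_in finite_subset by blast
  then show "finite (\<Union>R)" using assms copies_inD(1) by blast
  have "\<Union>(\<Union>R) \<subseteq> {..<m}" using assms copies_inD(3) by blast
  then show "finite (\<Union>(\<Union>R))" using finite_subset by blast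
qed

lemma card_Union_copies_le:
  assumes "R \<subseteq> copies_in m"
  shows "card (\<Union>R) \<le> card R * card E"
proof -
  have "card (\<Union>R) \<le> (\<Sum>S\<in>R. card S)" by (rule card_Union_le_sum_card)
  also have "\<dots> = (\<Sum>S\<in>R. card E)" using assms copies_inD(2) by (intro sum.cong) auto
  finally show ?thesis by simp
qed

lemma card_Union_vertex_disjoint_copies:
  assumes "R \<subseteq> copies_in m" "vertex_disjoint R"
  shows "card (\<Union>R) = card R * card E"
proof -
  have "S \<inter> T = {}" if "S \<in> R" "T \<in> R" "S \<noteq> T" for S T
  proof -
    have "\<Union>S \<inter> \<Union>T = {}" using assms(2) that by (simp add: vertex_disjoint_def)
    moreover have "d \<noteq> {}" if "d \<in> S" for d
      using that \<open>S \<in> R\<close> assms(1) copy_of_edge_nonempty by (auto simp: copies_in_def)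
    ultimately show ?thesis by blast
  qed
  then have "card (\<Union>R) = (\<Sum>S\<in>R. card S)"
    using assms(1) copies_inD(1) by (intro card_Union_disjoint) (auto simp: pairwise_def disjnt_def)
  also have "\<dots> = (\<Sum>S\<in>R. card E)" using assms(1) copies_inD(2) by (intro sum.cong) auto
  finally show ?thesis by simp
qed

text \<open>Since \<open>card E / kH = card V\<close>, gluing a copy onto \<open>(W, D)\<close> lowers the deficit by exactly
  the deficit of the part of \<open>H\<close> that the copy shares with \<open>(W, D)\<close>.\<close>

lemma deficit_union_copy:
  assumes "finite W" "finite D" "inj_on f V"
  shows "deficit (W \<union> f ` V) (D \<union> copy_of f)
       = deficit W D - deficit {x\<in>V. f x \<in> W} {e\<in>E. f ` e \<in> D}"
proof -
  have "W \<inter> f ` V = f ` {x\<in>V. f x \<in> W}" by auto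
  then have "card (W \<inter> f ` V) = card {x\<in>V. f x \<in> W}"
    using inj_on_subset[OF assms(3)] by (simp add: card_image)
  then have "card (W \<union> f ` V) + card {x\<in>V. f x \<in> W} = card W + card V"
    using card_Un_Int[OF assms(1) finite_imageI[OF finite_V, of f]] card_image[OF assms(3)] by simp
  then have vertices: "real (card (W \<union> f ` V)) = real (card W) + real (card V) - real (card {x\<in>V. f x \<in> W})"
    by (simp add: eq_diff_eq flip: of_nat_add)
  have "D \<inter> copy_of f = (`) f ` {e\<in>E. f ` e \<in> D}" by (auto simp: copy_of_def)
  then have "card (D \<union> copy_of f) + card {e\<in>E. f ` e \<in> D} = card D + card E"
    using card_Un_Int[OF assms(2), of "copy_of f"] inj_on_image_edges[OF assms(3)] finite_E
    by (simp add: copy_of_def card_image inj_on_subset)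
  then have "real (card (D \<union> copy_of f)) + real (card {e\<in>E. f ` e \<in> D}) = real (card D) + real (card E)"
    by (metis of_nat_add)
  then have "real (card (D \<union> copy_of f)) = real (card D) + kH * real (card V) - real (card {e\<in>E. f ` e \<in> D})"
    using card_E_eq by linarith
  then have edges: "real (card (D \<union> copy_of f)) / kH
      = real (card D) / kH + real (card V) - real (card {e\<in>E. f ` e \<in> D}) / kH"
    using kH_pos by (simp add: diff_divide_distrib add_divide_distrib)
  show ?thesis
    unfolding deficit_def using vertices edges by linarith
qed

text \<open>Strict balance makes \<open>H\<close> connected, which is what forces a covered copy into a single member.\<close>

lemma copy_covered_by_vertex_disjoint_copies:
  assumes R: "R \<subseteq> copies_in m" "vertex_disjoint R"
    and f: "f \<in> embeddings m" and covered: "copy_of f \<subseteq> \<Union>R"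
  shows "copy_of f \<in> R"
proof -
  obtain e0 where "e0 \<in> E" using edges_nonempty by blast
  then obtain T0 where T0: "T0 \<in> R" "f ` e0 \<in> T0"
    using covered by (auto simp: copy_of_def)
  define E1 where "E1 = {e\<in>E. f ` e \<in> T0}"
  have "E - E1 = {}"
  proof (rule ccontr)
    assume "E - E1 \<noteq> {}"
    moreover have "E1 \<noteq> {}" using \<open>e0 \<in> E\<close> T0 by (auto simp: E1_def)
    ultimately obtain x e1 e2 where x: "x \<in> e1" "e1 \<in> E1" "x \<in> e2" "e2 \<in> E - E1"
      using edge_partition_shares_vertex[of E1 "E - E1"] by (auto simp: E1_def)
    then obtain T2 where T2: "T2 \<in> R" "f ` e2 \<in> T2"
      using covered by (auto simp: copy_of_def E1_def)
    then have "T2 \<noteq> T0" using x by (auto simp: E1_def)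
    moreover have "f x \<in> \<Union>T0" "f x \<in> \<Union>T2" using x T2 by (auto simp: E1_def)
    ultimately show False using R(2) T0(1) T2(1) by (auto simp: vertex_disjoint_def)
  qed
  then have "copy_of f \<subseteq> T0" by (auto simp: copy_of_def E1_def)
  moreover have "copy_of f \<in> copies_in m" using f by (simp add: copies_in_def)
  then have "card (copy_of f) = card T0" using T0(1) R(1) copies_inD(2) by auto
  moreover have "finite T0" using T0(1) R(1) copies_inD(1) by blast
  ultimately have "copy_of f = T0" using card_subset_eq by blast
  then show ?thesis using T0 by simp
qed

lemma pullback_subgraph:
  assumes "\<forall>d\<in>D. d \<subseteq> W"
  shows "({x\<in>V. f x \<in> W}, {e\<in>E. f ` e \<in> D}) \<in> subgraphs V E"
  unfolding subgraphs_def using assms edge_subset by blast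

lemma min_deficit_le_deficit_pullback:
  assumes R: "R \<subseteq> copies_in m" "vertex_disjoint R"
    and f: "f \<in> embeddings m" "copy_of f \<notin> R"
    and meets: "T \<in> R" "\<Union>(copy_of f) \<inter> \<Union>T \<noteq> {}"
  shows "min_deficit \<le> deficit {x\<in>V. f x \<in> \<Union>(\<Union>R)} {e\<in>E. f ` e \<in> \<Union>R}"
proof (rule min_deficit_le[OF pullback_subgraph])
  obtain y where y: "y \<in> \<Union>(copy_of f)" "y \<in> \<Union>T" using meets(2) by blast
  then obtain x where "x \<in> V" "f x = y" unfolding Union_copy_of by blast
  moreover have "y \<in> \<Union>(\<Union>R)" using y(2) meets(1) by blast
  ultimately show "{x\<in>V. f x \<in> \<Union>(\<Union>R)} \<noteq> {}" by blast
  show "({x\<in>V. f x \<in> \<Union>(\<Union>R)}, {e\<in>E. f ` e \<in> \<Union>R}) \<noteq> (V, E)"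
  proof
    assume "({x\<in>V. f x \<in> \<Union>(\<Union>R)}, {e\<in>E. f ` e \<in> \<Union>R}) = (V, E)"
    then have "copy_of f \<subseteq> \<Union>R" by (auto simp: copy_of_def)
    then show False using copy_covered_by_vertex_disjoint_copies[OF R f(1)] f(2) by simp
  qed
qed blast

lemma deficit_union_copies:
  assumes "R \<subseteq> copies_in m"
  shows "deficit (\<Union>(\<Union>R)) (\<Union>R) \<le> 0 \<and> (\<not> vertex_disjoint R \<longrightarrow> deficit (\<Union>(\<Union>R)) (\<Union>R) \<le> - min_deficit)"
  using finite_family_of_copies(1)[OF assms] assms
proof (induction R rule: finite_induct)
  case empty
  then show ?case by (simp add: deficit_def vertex_disjoint_def)
next
  case (insert S R)
  obtain f where f: "f \<in> embeddings m" "S = copy_of f"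
    using insert.prems by (auto simp: copies_in_def)
  have R: "R \<subseteq> copies_in m" using insert.prems by simp
  define W' where "W' = {x\<in>V. f x \<in> \<Union>(\<Union>R)}"
  define D' where "D' = {e\<in>E. f ` e \<in> \<Union>R}"
  have step: "deficit (\<Union>(\<Union>(insert S R))) (\<Union>(insert S R)) = deficit (\<Union>(\<Union>R)) (\<Union>R) - deficit W' D'"
    using deficit_union_copy[OF finite_family_of_copies(3,2)[OF R] embeddingsD(1)[OF f(1)]]
    by (simp add: f(2) Union_copy_of W'_def D'_def Un_commute)
  have nonneg: "deficit W' D' \<ge> 0"
    unfolding W'_def D'_def by (intro deficit_nonneg pullback_subgraph) blast
  have IH: "deficit (\<Union>(\<Union>R)) (\<Union>R) \<le> 0"
    "\<not> vertex_disjoint R \<Longrightarrow> deficit (\<Union>(\<Union>R)) (\<Union>R) \<le> - min_deficit"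
    using insert.IH[OF R] by auto
  show ?case
  proof (intro conjI impI)
    show "deficit (\<Union>(\<Union>(insert S R))) (\<Union>(insert S R)) \<le> 0"
      using step IH(1) nonneg by linarith
    assume overlap: "\<not> vertex_disjoint (insert S R)"
    show "deficit (\<Union>(\<Union>(insert S R))) (\<Union>(insert S R)) \<le> - min_deficit"
    proof (cases "vertex_disjoint R")
      case True
      obtain T where T: "T \<in> R" "\<Union>(copy_of f) \<inter> \<Union>T \<noteq> {}"
        using overlap True f(2) unfolding vertex_disjoint_def by (metis Int_commute insertE)
      have "copy_of f \<notin> R" using insert.hyps(2) f(2) by simp
      from min_deficit_le_deficit_pullback[OF R True f(1) this T]
      have "min_deficit \<le> deficit W' D'" unfolding W'_def D'_def .
      then show ?thesis using step IH(1) by linarith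
    next
      case False
      then show ?thesis using step IH(2) nonneg by linarith
    qed
  qed
qed

lemma overlapping_copies_edge_bound:
  assumes "R \<subseteq> copies_in m" "\<not> vertex_disjoint R"
  shows "kH * (real (card (\<Union>(\<Union>R))) + min_deficit) \<le> real (card (\<Union>R))"
  using deficit_union_copies[OF assms(1)] assms(2) kH_pos
  by (simp add: deficit_def field_simps)

end

section \<open>Binomial moments of the copy count\<close>

lemma finite_all_pairs: "finite (all_pairs m)"
  by (rule finite_subset[of _ "Pow {..<m}"]) (auto simp: all_pairs_def)

lemma set_pmf_gnp: "set_pmf (gnp m p) \<subseteq> Pow (all_pairs m)"
  by (auto simp: gnp_def)

lemma expectation_gnp:
  fixes f :: "nat set set \<Rightarrow> real"
  shows "measure_pmf.expectation (gnp m p) f = (\<Sum>G\<in>Pow (all_pairs m). pmf (gnp m p) G * f G)"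
  using set_pmf_gnp by (subst integral_measure_pmf[of "Pow (all_pairs m)"]) (auto simp: finite_all_pairs)

lemma prob_gnp_superset:
  assumes p: "0 \<le> p" "p \<le> 1" and T: "T \<subseteq> all_pairs m"
  shows "measure_pmf.prob (gnp m p) {G. T \<subseteq> G} = p ^ card T"
proof -
  define B where "B e = (if e \<in> T then {True} else UNIV)" for e :: "nat set"
  have "(\<lambda>x. {e \<in> all_pairs m. x e}) -` {G. T \<subseteq> G} = Pi (all_pairs m) B"
    using T by (auto simp: B_def Pi_def split: if_splits)
  then have "measure_pmf.prob (gnp m p) {G. T \<subseteq> G}
      = measure_pmf.prob (Pi_pmf (all_pairs m) False (\<lambda>_. bernoulli_pmf p)) (Pi (all_pairs m) B)"
    by (simp add: gnp_def measure_map_pmf)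
  also have "\<dots> = (\<Prod>e\<in>all_pairs m. measure_pmf.prob (bernoulli_pmf p) (B e))"
    by (rule measure_Pi_pmf_Pi) (rule finite_all_pairs)
  also have "\<dots> = (\<Prod>e\<in>all_pairs m. if e \<in> T then p else 1)"
    by (intro prod.cong refl) (simp add: B_def measure_pmf_single p)
  also have "\<dots> = p ^ card T"
    using T finite_all_pairs[of m] by (simp add: prod.If_cases Int_absorb1)
  finally show ?thesis .
qed

context strictly_balanced_graph
begin

definition families :: "nat \<Rightarrow> nat \<Rightarrow> nat set set set set" where
  "families m r = {R. R \<subseteq> copies_in m \<and> card R = r}"

lemma finite_families: "finite (families m r)"
  by (rule finite_subset[of _ "Pow (copies_in m)"]) (auto simp: families_def finite_copies_in)

lemma card_families: "card (families m r) = card (copies_in m) choose r"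
  unfolding families_def by (rule n_subsets[OF finite_copies_in])

lemma binomial_moment_n_copies:
  assumes "0 \<le> p" "p \<le> 1"
  shows "measure_pmf.expectation (gnp m p) (\<lambda>G. real (n_copies m G choose r))
       = (\<Sum>R\<in>families m r. p ^ card (\<Union>R))"
proof -
  have "n_copies m G choose r = card {R \<in> families m r. \<Union>R \<subseteq> G}" for G
  proof -
    have "{R. R \<subseteq> {S \<in> copies_in m. S \<subseteq> G} \<and> card R = r} = {R \<in> families m r. \<Union>R \<subseteq> G}"
      by (auto simp: families_def)
    then show ?thesis
      unfolding n_copies_def using n_subsets[of "{S \<in> copies_in m. S \<subseteq> G}" r] finite_copies_in by simp
  qed
  then have "real (n_copies m G choose r) = (\<Sum>R\<in>families m r. indicator {G. \<Union>R \<subseteq> G} G)" for G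
    using finite_families by (simp add: indicator_def sum.If_cases Int_def)
  then have "measure_pmf.expectation (gnp m p) (\<lambda>G. real (n_copies m G choose r))
      = (\<Sum>R\<in>families m r. measure_pmf.prob (gnp m p) {G. \<Union>R \<subseteq> G})"
    using finite_subset[OF set_pmf_gnp] finite_all_pairs
    by (simp add: integrable_measure_pmf_finite)
  also have "\<dots> = (\<Sum>R\<in>families m r. p ^ card (\<Union>R))"
    using assms copies_inD(4) by (intro sum.cong refl prob_gnp_superset) (auto simp: families_def)
  finally show ?thesis .
qed

end

lemma power_le_powr_powr:
  fixes x k a :: real
  assumes x: "0 \<le> x" "x \<le> 1" and "k > 0" "a > 0" and N: "k * a \<le> real N"
  shows "x ^ N \<le> (x powr k) powr a"
proof (cases "x = 0")
  case True
  have "real N > 0" using mult_pos_pos[OF \<open>k > 0\<close> \<open>a > 0\<close>] N by linarith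
  then show ?thesis using True by (simp add: power_0_left)
next
  case False
  then have "x ^ N = x powr real N" using x by (simp add: powr_realpow)
  also have "\<dots> \<le> x powr (k * a)" using False x N by (intro powr_mono') auto
  finally show ?thesis by (simp add: powr_powr)
qed

lemma binomial_le_power: "n choose r \<le> n ^ r"
  by (cases "r \<le> n") (simp_all add: binomial_le_pow binomial_eq_0)

lemma powr_of_nat_add:
  fixes q d :: real
  assumes "q \<ge> 0"
  shows "q powr (real t + d) = q ^ t * q powr d"
  using assms by (cases "q = 0") (simp_all add: powr_add powr_realpow)

locale threshold_regime = strictly_balanced_graph V E for V :: "'a set" and E +
  fixes p :: "nat \<Rightarrow> real" and c :: real
  assumes p_prob: "\<And>m. 0 \<le> p m \<and> p m \<le> 1"
    and c_pos: "c > 0"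
    and p_lim: "(\<lambda>m. real m * p m powr kH) \<longlonglongrightarrow> c"
begin

definition q :: "nat \<Rightarrow> real" where "q m = p m powr kH"

definition mu :: real where "mu = c ^ card V / real (card (automorphisms V E))"

lemma mu_pos: "mu > 0"
  using c_pos card_automorphisms_pos by (simp add: mu_def)

lemma q_nonneg: "q m \<ge> 0"
  by (simp add: q_def)

lemma m_q_tendsto: "(\<lambda>m. real m * q m) \<longlonglongrightarrow> c"
  using p_lim by (simp add: q_def)

lemma q_tendsto_0: "q \<longlonglongrightarrow> 0"
proof -
  have "(\<lambda>m. (real m * q m) * (1 / real m)) \<longlonglongrightarrow> c * 0"
    by (intro tendsto_intros m_q_tendsto lim_const_over_n)
  moreover have "eventually (\<lambda>m. (real m * q m) * (1 / real m) = q m) sequentially"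
    using eventually_gt_at_top[of 0] by eventually_elim simp
  ultimately show ?thesis by (simp add: tendsto_cong)
qed

lemma p_power_card_E: "p m ^ card E = q m ^ card V"
proof (cases "p m = 0")
  case True
  then show ?thesis using card_V_pos kH_pos by (simp add: q_def power_0_left card_gt_0_iff finite_E edges_nonempty)
next
  case False
  then have "p m > 0" using p_prob[of m] by simp
  then show ?thesis
    by (simp add: q_def powr_realpow[symmetric] powr_powr card_E_eq mult.commute)
qed

lemma embeddings_tendsto: "(\<lambda>m. real (card (embeddings m)) * p m ^ card E) \<longlonglongrightarrow> c ^ card V"
proof -
  have "(\<lambda>m. \<Prod>i<card V. (real m - real i) * q m) \<longlonglongrightarrow> (\<Prod>i<card V. c)"
  proof (rule tendsto_prod)
    fix i
    have "(\<lambda>m. real m * q m - real i * q m) \<longlonglongrightarrow> c - real i * 0"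
      by (intro tendsto_intros m_q_tendsto q_tendsto_0)
    then show "(\<lambda>m. (real m - real i) * q m) \<longlonglongrightarrow> c" by (simp add: algebra_simps)
  qed
  moreover have "eventually (\<lambda>m. (\<Prod>i<card V. (real m - real i) * q m)
      = real (card (embeddings m)) * p m ^ card E) sequentially"
    using eventually_ge_at_top[of "card V"]
  proof eventually_elim
    case (elim m)
    then have "real (card (embeddings m)) = (\<Prod>i<card V. real m - real i)"
      by (simp add: card_embeddings of_nat_diff)
    then show ?case by (simp add: p_power_card_E prod.distrib)
  qed
  ultimately show ?thesis by (simp add: tendsto_cong)
qed

lemma copies_in_tendsto: "(\<lambda>m. real (card (copies_in m)) * p m ^ card E) \<longlonglongrightarrow> mu"
proof -
  have "(\<lambda>m. real (card (embeddings m)) * p m ^ card E / real (card (automorphisms V E))) \<longlonglongrightarrow> mu"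
    unfolding mu_def using card_automorphisms_pos by (intro tendsto_intros embeddings_tendsto) simp
  moreover have "real (card (embeddings m)) * p m ^ card E / real (card (automorphisms V E))
      = real (card (copies_in m)) * p m ^ card E" for m
    using card_automorphisms_pos by (simp flip: card_copies_in)
  ultimately show ?thesis by simp
qed

lemma families_tendsto: "(\<lambda>m. real (card (families m r)) * p m ^ (r * card E)) \<longlonglongrightarrow> mu ^ r / fact r"
proof -
  have "(\<lambda>m. (\<Prod>i<r. real (card (copies_in m)) * p m ^ card E - real i * p m ^ card E) / fact r)
      \<longlonglongrightarrow> (\<Prod>i<r. mu - real i * 0) / fact r"
  proof (intro tendsto_intros copies_in_tendsto)
    show "(\<lambda>m. p m ^ card E) \<longlonglongrightarrow> 0"
      using tendsto_power[OF q_tendsto_0, of "card V"]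
      unfolding p_power_card_E zero_power[OF card_V_pos] .
  qed simp
  moreover have "real (card (families m r)) * p m ^ (r * card E)
      = (\<Prod>i<r. real (card (copies_in m)) * p m ^ card E - real i * p m ^ card E) / fact r" for m
  proof -
    have "real (card (families m r)) = (\<Prod>i<r. real (card (copies_in m)) - real i) / fact r"
      by (simp add: card_families binomial_gbinomial gbinomial_prod_rev atLeast0LessThan)
    moreover have "p m ^ (r * card E) = (\<Prod>i<r. p m ^ card E)"
      by (simp add: mult.commute[of r] power_mult)
    ultimately have "real (card (families m r)) * p m ^ (r * card E)
        = (\<Prod>i<r. real (card (copies_in m)) - real i) * (\<Prod>i<r. p m ^ card E) / fact r"
      by simp
    also have "\<dots> = (\<Prod>i<r. (real (card (copies_in m)) - real i) * p m ^ card E) / fact r"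
      by (simp only: prod.distrib)
    finally show ?thesis by (simp only: left_diff_distrib)
  qed
  ultimately show ?thesis by simp
qed

lemma card_copies_within:
  assumes "finite U"
  shows "card {S \<in> copies_in m. \<Union>S \<subseteq> U} \<le> card U ^ card V"
proof -
  have "{S \<in> copies_in m. \<Union>S \<subseteq> U} \<subseteq> copy_of ` (V \<rightarrow>\<^sub>E U)"
  proof
    fix S
    assume "S \<in> {S \<in> copies_in m. \<Union>S \<subseteq> U}"
    then obtain f where f: "f \<in> embeddings m" "S = copy_of f" "f ` V \<subseteq> U"
      by (auto simp: copies_in_def Union_copy_of)
    then have "f \<in> V \<rightarrow>\<^sub>E U" using embeddingsD(3)[OF f(1)] by (auto simp: PiE_iff)
    then show "S \<in> copy_of ` (V \<rightarrow>\<^sub>E U)" using f(2) by blast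
  qed
  moreover have "finite (V \<rightarrow>\<^sub>E U)" using assms finite_V by (simp add: finite_PiE)
  ultimately have "card {S \<in> copies_in m. \<Union>S \<subseteq> U} \<le> card (copy_of ` (V \<rightarrow>\<^sub>E U))"
    by (intro card_mono finite_imageI)
  also have "\<dots> \<le> card (V \<rightarrow>\<^sub>E U)"
    using \<open>finite (V \<rightarrow>\<^sub>E U)\<close> by (rule card_image_le)
  also have "\<dots> = card U ^ card V" using finite_V by (simp add: card_funcsetE)
  finally show ?thesis .
qed

text \<open>A family is determined by its vertex set (\<open>m choose t\<close> choices) and then
  by its \<open>r\<close> copies inside it.\<close>

lemma card_families_with_vertices:
  "card {R \<in> families m r. card (\<Union>(\<Union>R)) = t} \<le> (m choose t) * (t ^ card V) ^ r"
proof -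
  define Us where "Us = {U. U \<subseteq> {..<m} \<and> card U = t}"
  define F where "F U = {R. R \<subseteq> {S \<in> copies_in m. \<Union>S \<subseteq> U} \<and> card R = r}" for U
  have cover: "{R \<in> families m r. card (\<Union>(\<Union>R)) = t} \<subseteq> (\<Union>U\<in>Us. F U)"
  proof
    fix R
    assume R: "R \<in> {R \<in> families m r. card (\<Union>(\<Union>R)) = t}"
    then have "\<Union>(\<Union>R) \<in> Us" using copies_inD(3) by (fastforce simp: Us_def families_def)
    moreover have "R \<in> F (\<Union>(\<Union>R))" using R by (auto simp: F_def families_def)
    ultimately show "R \<in> (\<Union>U\<in>Us. F U)" by blast
  qed
  have finite_Us: "finite Us"
    by (rule finite_subset[of _ "Pow {..<m}"]) (auto simp: Us_def)
  have "finite (F U)" for U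
    by (rule finite_subset[of _ "Pow (copies_in m)"]) (auto simp: F_def finite_copies_in)
  then have "card {R \<in> families m r. card (\<Union>(\<Union>R)) = t} \<le> card (\<Union>U\<in>Us. F U)"
    using finite_Us cover by (intro card_mono) auto
  also have "\<dots> \<le> (\<Sum>U\<in>Us. card (F U))"
    using finite_Us by (rule card_UN_le)
  also have "\<dots> \<le> (\<Sum>U\<in>Us. (t ^ card V) ^ r)"
  proof (rule sum_mono)
    fix U
    assume "U \<in> Us"
    then have U: "finite U" "card U = t" by (auto simp: Us_def intro: finite_subset)
    have "card (F U) = card {S \<in> copies_in m. \<Union>S \<subseteq> U} choose r"
      unfolding F_def by (rule n_subsets) (simp add: finite_copies_in)
    also have "\<dots> \<le> card {S \<in> copies_in m. \<Union>S \<subseteq> U} ^ r" by (rule binomial_le_power)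
    also have "\<dots> \<le> (t ^ card V) ^ r" using card_copies_within[OF U(1)] U(2) by (intro power_mono) auto
    finally show "card (F U) \<le> (t ^ card V) ^ r" .
  qed
  also have "\<dots> = (m choose t) * (t ^ card V) ^ r"
    using n_subsets[of "{..<m}" t] by (simp add: Us_def)
  finally show ?thesis .
qed

definition overlapping :: "nat \<Rightarrow> nat \<Rightarrow> nat set set set set" where
  "overlapping m r = {R \<in> families m r. \<not> vertex_disjoint R}"

lemma finite_overlapping: "finite (overlapping m r)"
  using finite_families by (simp add: overlapping_def)

lemma overlapping_vertices_bound:
  assumes "R \<in> overlapping m r"
  shows "kH * (real (card (\<Union>(\<Union>R))) + min_deficit) \<le> real (card (\<Union>R))"
    and "kH * (real (card (\<Union>(\<Union>R))) + min_deficit) \<le> real (r * card E)"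
    and "card (\<Union>(\<Union>R)) \<le> r * card V"
proof -
  have R: "R \<subseteq> copies_in m" "card R = r" "\<not> vertex_disjoint R"
    using assms by (auto simp: overlapping_def families_def)
  show edges: "kH * (real (card (\<Union>(\<Union>R))) + min_deficit) \<le> real (card (\<Union>R))"
    using overlapping_copies_edge_bound R by blast
  also have "real (card (\<Union>R)) \<le> real (r * card E)"
    unfolding of_nat_le_iff using card_Union_copies_le[OF R(1)] R(2) by simp
  finally show total: "kH * (real (card (\<Union>(\<Union>R))) + min_deficit) \<le> real (r * card E)" .
  then have "kH * (real (card (\<Union>(\<Union>R))) + min_deficit) \<le> kH * real (r * card V)"
    by (simp add: card_E_eq mult_ac)
  then have "real (card (\<Union>(\<Union>R))) + min_deficit \<le> real (r * card V)"
    using kH_pos by simp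
  then show "card (\<Union>(\<Union>R)) \<le> r * card V" using min_deficit_pos by linarith
qed

lemma overlapping_probabilities_le:
  assumes "R \<in> overlapping m r"
  shows "p m ^ card (\<Union>R) \<le> q m powr (real (card (\<Union>(\<Union>R))) + min_deficit)"
    and "p m ^ (r * card E) \<le> q m powr (real (card (\<Union>(\<Union>R))) + min_deficit)"
proof -
  have "real (card (\<Union>(\<Union>R))) + min_deficit > 0"
    using min_deficit_pos by (simp add: add_nonneg_pos)
  then show "p m ^ card (\<Union>R) \<le> q m powr (real (card (\<Union>(\<Union>R))) + min_deficit)"
    and "p m ^ (r * card E) \<le> q m powr (real (card (\<Union>(\<Union>R))) + min_deficit)"
    unfolding q_def using p_prob[of m] kH_pos overlapping_vertices_bound(1,2)[OF assms]
    by (simp_all add: power_le_powr_powr)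
qed

lemma overlapping_sum_le:
  "(\<Sum>R\<in>overlapping m r. q m powr (real (card (\<Union>(\<Union>R))) + min_deficit))
    \<le> (\<Sum>t\<le>r * card V. real ((t ^ card V) ^ r) * ((real m * q m) ^ t * q m powr min_deficit))"
proof -
  define g where "g t = q m powr (real t + min_deficit)" for t :: nat
  have "(\<Sum>R\<in>overlapping m r. g (card (\<Union>(\<Union>R))))
      = (\<Sum>t\<le>r * card V. \<Sum>R\<in>{R \<in> overlapping m r. card (\<Union>(\<Union>R)) = t}. g (card (\<Union>(\<Union>R))))"
    by (rule sum.group[symmetric]) (use finite_overlapping overlapping_vertices_bound(3) in auto)
  also have "\<dots> = (\<Sum>t\<le>r * card V. real (card {R \<in> overlapping m r. card (\<Union>(\<Union>R)) = t}) * g t)"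
    by simp
  also have "\<dots> \<le> (\<Sum>t\<le>r * card V. real (m ^ t * (t ^ card V) ^ r) * g t)"
  proof (intro sum_mono mult_right_mono)
    fix t
    have "card {R \<in> overlapping m r. card (\<Union>(\<Union>R)) = t} \<le> card {R \<in> families m r. card (\<Union>(\<Union>R)) = t}"
      using finite_families by (intro card_mono) (auto simp: overlapping_def)
    also have "\<dots> \<le> (m choose t) * (t ^ card V) ^ r" by (rule card_families_with_vertices)
    also have "\<dots> \<le> m ^ t * (t ^ card V) ^ r" by (intro mult_right_mono binomial_le_power) simp
    finally show "real (card {R \<in> overlapping m r. card (\<Union>(\<Union>R)) = t}) \<le> real (m ^ t * (t ^ card V) ^ r)"
      by (simp only: of_nat_le_iff)
  qed (simp add: g_def)
  also have "\<dots> = (\<Sum>t\<le>r * card V. real ((t ^ card V) ^ r) * ((real m * q m) ^ t * q m powr min_deficit))"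
    unfolding g_def using q_nonneg
    by (intro sum.cong refl) (simp add: powr_of_nat_add power_mult_distrib mult_ac)
  finally show ?thesis by (simp add: g_def)
qed

text \<open>Each term of the bound is \<open>O((m q)\<^sup>t q\<^sup>\<delta>)\<close>, with \<open>m q \<longrightarrow> c\<close> and \<open>q\<^sup>\<delta> \<longrightarrow> 0\<close>: the factor \<open>q\<^sup>\<delta>\<close>
  is what strict balance buys.\<close>

lemma overlapping_tendsto_0:
  "(\<lambda>m. \<Sum>R\<in>overlapping m r. q m powr (real (card (\<Union>(\<Union>R))) + min_deficit)) \<longlonglongrightarrow> 0"
proof (rule tendsto_sandwich[OF _ _ tendsto_const])
  show "eventually (\<lambda>m. 0 \<le> (\<Sum>R\<in>overlapping m r. q m powr (real (card (\<Union>(\<Union>R))) + min_deficit))) sequentially"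
    by (simp add: sum_nonneg)
  show "eventually (\<lambda>m. (\<Sum>R\<in>overlapping m r. q m powr (real (card (\<Union>(\<Union>R))) + min_deficit))
      \<le> (\<Sum>t\<le>r * card V. real ((t ^ card V) ^ r) * ((real m * q m) ^ t * q m powr min_deficit))) sequentially"
    by (intro always_eventually allI overlapping_sum_le)
  have "(\<lambda>m. q m powr min_deficit) \<longlonglongrightarrow> 0"
    using q_nonneg min_deficit_pos by (intro tendsto_zero_powrI[OF q_tendsto_0 tendsto_const]) auto
  then have "(\<lambda>m. \<Sum>t\<le>r * card V. real ((t ^ card V) ^ r) * ((real m * q m) ^ t * q m powr min_deficit))
      \<longlonglongrightarrow> (\<Sum>t\<le>r * card V. real ((t ^ card V) ^ r) * (c ^ t * 0))"
    by (intro tendsto_intros m_q_tendsto)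
  then show "(\<lambda>m. \<Sum>t\<le>r * card V. real ((t ^ card V) ^ r) * ((real m * q m) ^ t * q m powr min_deficit))
      \<longlonglongrightarrow> 0"
    by simp
qed

text \<open>Vertex-disjoint families have exactly \<open>r e(H)\<close> edges, and the overlapping ones are
  negligible by strict balance.\<close>

lemma binomial_moment_tendsto: "(\<lambda>m. \<Sum>R\<in>families m r. p m ^ card (\<Union>R)) \<longlonglongrightarrow> mu ^ r / fact r"
proof -
  define err where "err m = (\<Sum>R\<in>overlapping m r. p m ^ card (\<Union>R)) - (\<Sum>R\<in>overlapping m r. p m ^ (r * card E))"
    for m
  have "(\<Sum>R\<in>families m r. p m ^ card (\<Union>R)) = real (card (families m r)) * p m ^ (r * card E) + err m" for m
  proof -
    have sub: "overlapping m r \<subseteq> families m r" by (auto simp: overlapping_def)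
    have disj: "p m ^ card (\<Union>R) = p m ^ (r * card E)" if "R \<in> families m r - overlapping m r" for R
      using that card_Union_vertex_disjoint_copies by (auto simp: overlapping_def families_def)
    have "(\<Sum>R\<in>families m r. p m ^ card (\<Union>R))
        = (\<Sum>R\<in>families m r - overlapping m r. p m ^ card (\<Union>R)) + (\<Sum>R\<in>overlapping m r. p m ^ card (\<Union>R))"
      by (rule sum.subset_diff[OF sub finite_families])
    also have "(\<Sum>R\<in>families m r - overlapping m r. p m ^ card (\<Union>R))
        = (\<Sum>R\<in>families m r - overlapping m r. p m ^ (r * card E))"
      by (rule sum.cong[OF refl disj])
    also have "(\<Sum>R\<in>families m r - overlapping m r. p m ^ (r * card E))
        = real (card (families m r)) * p m ^ (r * card E) - (\<Sum>R\<in>overlapping m r. p m ^ (r * card E))"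
      using sub finite_subset[OF sub finite_families]
      by (simp add: card_Diff_subset of_nat_diff card_mono finite_families left_diff_distrib)
    finally show ?thesis by (simp add: err_def)
  qed
  moreover have "err \<longlonglongrightarrow> 0 - 0"
    unfolding err_def
  proof (intro tendsto_diff; rule tendsto_sandwich[OF _ _ tendsto_const overlapping_tendsto_0[of r]])
    show "eventually (\<lambda>m. 0 \<le> (\<Sum>R\<in>overlapping m r. p m ^ card (\<Union>R))) sequentially"
      "eventually (\<lambda>m. 0 \<le> (\<Sum>R\<in>overlapping m r. p m ^ (r * card E))) sequentially"
      using p_prob by (simp_all add: sum_nonneg)
    show "eventually (\<lambda>m. (\<Sum>R\<in>overlapping m r. p m ^ card (\<Union>R))
        \<le> (\<Sum>R\<in>overlapping m r. q m powr (real (card (\<Union>(\<Union>R))) + min_deficit))) sequentially"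
      "eventually (\<lambda>m. (\<Sum>R\<in>overlapping m r. p m ^ (r * card E))
        \<le> (\<Sum>R\<in>overlapping m r. q m powr (real (card (\<Union>(\<Union>R))) + min_deficit))) sequentially"
      by (intro always_eventually allI sum_mono overlapping_probabilities_le; assumption)+
  qed
  moreover have "(\<lambda>m. real (card (families m r)) * p m ^ (r * card E) + err m) \<longlonglongrightarrow> mu ^ r / fact r + (0 - 0)"
    by (intro tendsto_add families_tendsto \<open>err \<longlonglongrightarrow> 0 - 0\<close>)
  ultimately show ?thesis by simp
qed

end

section \<open>The root of the tilted mean\<close>

locale tilted_root_regime = threshold_regime V E p c for V :: "'a set" and E p c +
  fixes h0 :: real
  assumes h0_pos: "h0 > 0" and h0_le_mu: "h0 \<le> mu"
begin

definition tilted_mean :: "nat \<Rightarrow> real \<Rightarrow> real" where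
  "tilted_mean m l = measure_pmf.expectation (gnp m (p m)) (\<lambda>G. tilted h0 l (real (n_copies m G)))"

lemma tilted_mean_eq_sum:
  "tilted_mean m l = (\<Sum>G\<in>Pow (all_pairs m). pmf (gnp m (p m)) G * tilted h0 l (real (n_copies m G)))"
  by (simp add: tilted_mean_def expectation_gnp)

lemma tilted_mean_antimono: "l1 \<le> l2 \<Longrightarrow> tilted_mean m l2 \<le> tilted_mean m l1"
  unfolding tilted_mean_eq_sum by (intro sum_mono mult_left_mono tilted_antimono) auto

lemma binomial_moments_gnp:
  "(\<lambda>m. \<Sum>G\<in>Pow (all_pairs m). pmf (gnp m (p m)) G * real (n_copies m G choose r)) \<longlonglongrightarrow> mu ^ r / fact r"
  using binomial_moment_tendsto[of r] binomial_moment_n_copies[of "p _"] p_prob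
  by (simp add: expectation_gnp)

lemma tilted_mean_tendsto:
  assumes "0 \<le> l"
  shows "(\<lambda>m. tilted_mean m l) \<longlonglongrightarrow> measure_pmf.expectation (poisson_pmf mu) (\<lambda>z. tilted h0 l (real z))"
proof -
  define s where "s = exp (- l)"
  define w where "w m G = pmf (gnp m (p m)) G" for m G
  have s: "0 \<le> s" "s \<le> 1" using assms by (auto simp: s_def)
  have moments: "(\<lambda>m. \<Sum>G\<in>Pow (all_pairs m). w m G * real (n_copies m G choose r)) \<longlonglongrightarrow> 1 * (mu ^ r / fact r)" for r
    using binomial_moments_gnp by (simp add: w_def)
  have "(\<lambda>m. exp (l * h0) * ((\<Sum>G\<in>Pow (all_pairs m). w m G * (real (n_copies m G) * s ^ n_copies m G))
        - h0 * (\<Sum>G\<in>Pow (all_pairs m). w m G * s ^ n_copies m G)))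
      \<longlonglongrightarrow> exp (l * h0) * (mu * s * exp (mu * (s - 1)) - h0 * (1 * exp (mu * (s - 1))))"
    using finite_all_pairs moments s
    by (intro tendsto_intros binomial_moments_imp_pgf_tendsto binomial_moments_imp_pgf_deriv_tendsto)
      (auto simp: w_def)
  moreover have "exp (l * h0) * ((\<Sum>G\<in>Pow (all_pairs m). w m G * (real (n_copies m G) * s ^ n_copies m G))
        - h0 * (\<Sum>G\<in>Pow (all_pairs m). w m G * s ^ n_copies m G)) = tilted_mean m l" for m
    unfolding tilted_mean_eq_sum tilted_of_nat w_def s_def
    by (simp add: sum_distrib_left sum_subtractf algebra_simps)
  moreover have "exp (l * h0) * (mu * s * exp (mu * (s - 1)) - h0 * (1 * exp (mu * (s - 1))))
      = measure_pmf.expectation (poisson_pmf mu) (\<lambda>z. tilted h0 l (real z))"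
  proof -
    have "mu * (s - 1) = - mu + mu * s" by (simp add: algebra_simps)
    then have "exp (mu * (s - 1)) = exp (- mu) * exp (mu * s)" by (simp only: exp_add)
    then show ?thesis
      using mu_pos by (simp add: expectation_poisson_tilted s_def algebra_simps)
  qed
  ultimately show ?thesis by simp
qed

lemma eventually_tilted_mean_neg:
  assumes "ln (mu / h0) < b"
  shows "eventually (\<lambda>m. tilted_mean m b < 0) sequentially"
proof (rule order_tendstoD(2)[OF tilted_mean_tendsto])
  have "0 \<le> ln (mu / h0)" using h0_pos h0_le_mu by (intro ln_ge_zero) simp
  then show "0 \<le> b" using assms by linarith
  show "measure_pmf.expectation (poisson_pmf mu) (\<lambda>z. tilted h0 b (real z)) < 0"
    using expectation_poisson_tilted_neg mu_pos h0_pos assms by blast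
qed

text \<open>For negative arguments the Poisson limit of \<open>tilted_mean\<close> is not available (the
  generating function is evaluated beyond \<open>1\<close>), so positivity is obtained from a
  quadratic lower bound that only involves the first two binomial moments.\<close>

lemma quadratic_mean_tendsto:
  "(\<lambda>m. \<Sum>G\<in>Pow (all_pairs m). pmf (gnp m (p m)) G * ((real (n_copies m G) - h0) + e / 2 * (real (n_copies m G) - h0) ^ 2))
    \<longlonglongrightarrow> (mu - h0) + e / 2 * ((mu - h0) ^ 2 + mu)"
proof -
  define M where "M k m = (\<Sum>G\<in>Pow (all_pairs m). pmf (gnp m (p m)) G * real (n_copies m G choose k))" for k m
  have quadratic: "(real n - h0) + e / 2 * (real n - h0) ^ 2
      = (1 - e * h0 + e / 2) * real (n choose 1) + e * real (n choose 2) + (e / 2 * h0 ^ 2 - h0) * real (n choose 0)"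
    for n
    using of_nat_power2_eq_choose_two[of n] by (simp add: power2_eq_square algebra_simps)
  have decomposition: "(\<Sum>G\<in>Pow (all_pairs m). pmf (gnp m (p m)) G * ((real (n_copies m G) - h0) + e / 2 * (real (n_copies m G) - h0) ^ 2))
      = (1 - e * h0 + e / 2) * M 1 m + e * M 2 m + (e / 2 * h0 ^ 2 - h0) * M 0 m" for m
  proof -
    have "(\<Sum>G\<in>Pow (all_pairs m). pmf (gnp m (p m)) G * ((real (n_copies m G) - h0) + e / 2 * (real (n_copies m G) - h0) ^ 2))
        = (\<Sum>G\<in>Pow (all_pairs m). (1 - e * h0 + e / 2) * (pmf (gnp m (p m)) G * real (n_copies m G choose 1))
            + e * (pmf (gnp m (p m)) G * real (n_copies m G choose 2))
            + (e / 2 * h0 ^ 2 - h0) * (pmf (gnp m (p m)) G * real (n_copies m G choose 0)))"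
      unfolding quadratic by (intro sum.cong refl) (simp only: algebra_simps)
    then show ?thesis
      unfolding M_def by (simp only: sum.distrib sum_distrib_left)
  qed
  have "(\<lambda>m. (1 - e * h0 + e / 2) * M 1 m + e * M 2 m + (e / 2 * h0 ^ 2 - h0) * M 0 m)
      \<longlonglongrightarrow> (1 - e * h0 + e / 2) * (mu ^ 1 / fact 1) + e * (mu ^ 2 / fact 2) + (e / 2 * h0 ^ 2 - h0) * (mu ^ 0 / fact 0)"
    unfolding M_def by (intro tendsto_intros binomial_moments_gnp)
  also have "(1 - e * h0 + e / 2) * (mu ^ 1 / fact 1) + e * (mu ^ 2 / fact 2) + (e / 2 * h0 ^ 2 - h0) * (mu ^ 0 / fact 0)
      = (mu - h0) + e / 2 * ((mu - h0) ^ 2 + mu)"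
    by (simp add: fact_numeral power2_eq_square algebra_simps)
  finally show ?thesis unfolding decomposition .
qed

lemma quadratic_mean_le_tilted_mean:
  assumes "0 < e" "e * h0 \<le> 1"
  shows "(\<Sum>G\<in>Pow (all_pairs m). pmf (gnp m (p m)) G * ((real (n_copies m G) - h0) + e / 2 * (real (n_copies m G) - h0) ^ 2))
    \<le> tilted_mean m (- e)"
  unfolding tilted_mean_eq_sum
proof (intro sum_mono mult_left_mono)
  fix G
  have "- 1 \<le> e * (real (n_copies m G) - h0)"
    using assms by (smt (verit) mult_nonneg_nonneg of_nat_0_le_iff right_diff_distrib)
  then show "(real (n_copies m G) - h0) + e / 2 * (real (n_copies m G) - h0) ^ 2 \<le> tilted h0 (- e) (real (n_copies m G))"
    using assms mult_exp_ge_quadratic[of e "real (n_copies m G) - h0"] by (simp add: tilted_def)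
qed simp

lemma eventually_tilted_mean_pos:
  assumes "a < ln (mu / h0)"
  shows "eventually (\<lambda>m. 0 < tilted_mean m a) sequentially"
proof (cases "0 \<le> a")
  case True
  show ?thesis
  proof (rule order_tendstoD(1)[OF tilted_mean_tendsto[OF True]])
    show "0 < measure_pmf.expectation (poisson_pmf mu) (\<lambda>z. tilted h0 a (real z))"
      using expectation_poisson_tilted_pos mu_pos h0_pos assms by blast
  qed
next
  case False
  define e where "e = min (- a) (1 / h0)"
  have e: "0 < e" "e * h0 \<le> 1" "a \<le> - e"
    using False h0_pos by (auto simp: e_def min_def field_simps)
  have "0 < (mu - h0) + e / 2 * ((mu - h0) ^ 2 + mu)"
    using e h0_le_mu mu_pos by (simp add: add_nonneg_pos)
  from order_tendstoD(1)[OF quadratic_mean_tendsto this]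
  show ?thesis
  proof eventually_elim
    case (elim m)
    then show ?case
      using quadratic_mean_le_tilted_mean[OF e(1,2), of m] tilted_mean_antimono[OF e(3), of m] by linarith
  qed
qed

lemma the_root_tilted_mean_tendsto: "(\<lambda>m. THE l. tilted_mean m l = 0) \<longlonglongrightarrow> ln (mu / h0)"
proof (rule tendstoI)
  fix \<epsilon> :: real
  assume "\<epsilon> > 0"
  let ?l0 = "ln (mu / h0)"
  have "eventually (\<lambda>m. 0 < tilted_mean m (?l0 - \<epsilon>)) sequentially"
    "eventually (\<lambda>m. tilted_mean m (?l0 + \<epsilon>) < 0) sequentially"
    using \<open>\<epsilon> > 0\<close> by (auto intro!: eventually_tilted_mean_pos eventually_tilted_mean_neg)
  then show "eventually (\<lambda>m. dist (THE l. tilted_mean m l = 0) ?l0 < \<epsilon>) sequentially"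
  proof eventually_elim
    case (elim m)
    have "(THE l. tilted_mean m l = 0) \<in> {?l0 - \<epsilon><..<?l0 + \<epsilon>}"
      using elim \<open>\<epsilon> > 0\<close> finite_all_pairs unfolding tilted_mean_eq_sum
      by (intro the_root_of_tilted_sum) auto
    then show ?case by (simp add: dist_real_def abs_less_iff)
  qed
qed

end

theorem mainTheorem3:
  fixes V :: "'a set" and E :: "'a set set"
    and p :: "nat \<Rightarrow> real" and c h0 :: real
  assumes H: "simple_graph V E" and nonempty_edges: "E \<noteq> {}"
    and sb: "strictly_balanced V E"
    and c_pos: "c > 0" and h0_pos: "h0 > 0"
    and p_prob: "\<And>m. 0 \<le> p m \<and> p m \<le> 1"
    and p_lim: "(\<lambda>m. real m * p m powr max_density V E) \<longlonglongrightarrow> c"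
    and mu_ge: "c ^ card V / real (card (automorphisms V E)) \<ge> h0"
  shows "(\<lambda>m. (THE l. measure_pmf.expectation (gnp m (p m))
                  (\<lambda>G. (copies V E m G - h0) * exp (- l * (copies V E m G - h0))) = 0))
         \<longlonglongrightarrow>
         (THE l. measure_pmf.expectation
                  (poisson_pmf (c ^ card V / real (card (automorphisms V E))))
                  (\<lambda>z. (real z - h0) * exp (- l * (real z - h0))) = 0)"
proof -
  interpret strictly_balanced_graph V E
    using H nonempty_edges sb by unfold_locales
  interpret threshold_regime V E p c
    using p_prob c_pos p_lim by unfold_locales (simp_all add: max_density_eq)
  interpret tilted_root_regime V E p c h0
    using mu_ge h0_pos by unfold_locales (simp_all add: mu_def)
  have "(\<lambda>G. (copies V E m G - h0) * exp (- l * (copies V E m G - h0)))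
      = (\<lambda>G. tilted h0 l (real (n_copies m G)))" for m l
    by (simp add: copies_eq_n_copies tilted_def)
  moreover have "(\<lambda>z. (real z - h0) * exp (- l * (real z - h0))) = (\<lambda>z. tilted h0 l (real z))" for l
    by (simp add: tilted_def)
  ultimately show ?thesis
    using the_root_tilted_mean_tendsto poisson_tilted_root[OF mu_pos h0_pos]
    by (simp add: tilted_mean_def mu_def)
qed

end
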